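(* Let $\omega$ be a primitive $3$rd root of unity, $B = \mathbb{Z}_3[\omega] = \mathbb{Z}_3 + \mathbb{Z}_3\omega \cong \mathbb{Z}_3^2$, and $G_0 = \langle w \rangle \ltimes B$ where $\langle w \rangle \cong C_3$ acts on $B$ by multiplication by $\omega$. Then every open subgroup of $G_0$ not contained in $B$ is isomorphic to $G_0$, and $G_0$ has constant generating number $2$ on open subgroups, i.e.\ $d(H) = 2$ for every open subgroup $H$ of $G_0$.
   Context: $d(H)$ denotes the minimal number of topological generators of a profinite group $H$. *)

theory Defs
  imports "HOL-Algebra.Algebra"
begin

section \<open>The 3-adic integers Z_3, as coherent sequences of residues mod 3^n\<close>

definition zp :: "(nat \<Rightarrow> int) set" where
  "zp = {x. \<forall>n. 0 \<le> x n \<and> x n < 3 ^ n \<and> x n = x (Suc n) mod 3 ^ n}"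

definition zp_zero :: "nat \<Rightarrow> int" where
  "zp_zero = (\<lambda>n. 0)"

definition zp_add :: "(nat \<Rightarrow> int) \<Rightarrow> (nat \<Rightarrow> int) \<Rightarrow> (nat \<Rightarrow> int)" where
  "zp_add x y = (\<lambda>n. (x n + y n) mod 3 ^ n)"

definition zp_neg :: "(nat \<Rightarrow> int) \<Rightarrow> (nat \<Rightarrow> int)" where
  "zp_neg x = (\<lambda>n. (- x n) mod 3 ^ n)"

text \<open>An element (a, b) stands for a + b omega. Multiplication by omega:
  (a + b omega) omega = -b + (a - b) omega.\<close>

definition om :: "(nat \<Rightarrow> int) \<times> (nat \<Rightarrow> int) \<Rightarrow> (nat \<Rightarrow> int) \<times> (nat \<Rightarrow> int)" where
  "om p = (case p of (a, b) \<Rightarrow> (zp_neg b, zp_add a (zp_neg b)))"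

text \<open>(k, a, b) stands for beta w^k with beta = a + b omega, k in {0,1,2};
  (beta w^k)(beta' w^k') = (beta + omega^k beta') w^(k+k').\<close>

type_synonym g0elt = "nat \<times> (nat \<Rightarrow> int) \<times> (nat \<Rightarrow> int)"

definition g0_mult :: "g0elt \<Rightarrow> g0elt \<Rightarrow> g0elt" where
  "g0_mult x y =
     (let (c, d) = (om ^^ fst x) (fst (snd y), snd (snd y))
      in ((fst x + fst y) mod 3, zp_add (fst (snd x)) c, zp_add (snd (snd x)) d))"

definition G0 :: "g0elt monoid" where
  "G0 = \<lparr> carrier = {(k, a, b). k < 3 \<and> a \<in> zp \<and> b \<in> zp},
          monoid.mult = g0_mult,
          one = (0, zp_zero, zp_zero) \<rparr>"

definition B :: "g0elt set" where
  "B = {(k, a, b). k = 0 \<and> a \<in> zp \<and> b \<in> zp}"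

text \<open>Basic open neighbourhoods of the identity: N n = 3^n B. These form a
  neighbourhood basis of 1 for the profinite topology of G_0
  (= product topology of the discrete C_3 with Z_3 x Z_3).\<close>

definition Nbh :: "nat \<Rightarrow> g0elt set" where
  "Nbh n = {(k, a, b). k = 0 \<and> a \<in> zp \<and> b \<in> zp \<and> a n = 0 \<and> b n = 0}"

text \<open>A subgroup of a topological group is open iff it contains a neighbourhood
  of the identity.\<close>

definition open_subgroup :: "g0elt set \<Rightarrow> bool" where
  "open_subgroup H \<longleftrightarrow> subgroup H G0 \<and> (\<exists>n. Nbh n \<subseteq> H)"

text \<open>Topological closure in G_0: x is in the closure of A iff every
  neighbourhood x N_n meets A, i.e. x \<in> A N_n for all n.\<close>

definition g0_closure :: "g0elt set \<Rightarrow> g0elt set" where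
  "g0_closure A = (\<Inter>n. A <#>\<^bsub>G0\<^esub> Nbh n)"

definition top_generates :: "g0elt set \<Rightarrow> g0elt set \<Rightarrow> bool" where
  "top_generates H S \<longleftrightarrow> S \<subseteq> H \<and> g0_closure (generate G0 S) = H"

definition dgen :: "g0elt set \<Rightarrow> nat" where
  "dgen H = (LEAST n. \<exists>S. finite S \<and> card S = n \<and> top_generates H S)"

text \<open>Continuity of a group homomorphism between (subgroups of) G_0 is
  continuity at the identity.\<close>

definition cont_hom :: "g0elt set \<Rightarrow> (g0elt \<Rightarrow> g0elt) \<Rightarrow> bool" where
  "cont_hom H f \<longleftrightarrow> (\<forall>n. \<exists>m. f ` (H \<inter> Nbh m) \<subseteq> Nbh n)"

definition top_iso_G0 :: "g0elt set \<Rightarrow> bool" where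
  "top_iso_G0 H \<longleftrightarrow> (\<exists>f. f \<in> iso (G0\<lparr>carrier := H\<rparr>) G0 \<and> cont_hom H f
      \<and> cont_hom (carrier G0) (inv_into H f))"

end

theory Submission
  imports Defs "HOL-Number_Theory.Cong"
begin

text \<open>
  Write \<open>G\<^sub>0 = \<langle>w\<rangle> \<ltimes> B\<close> with \<open>B = \<int>\<^sub>3[\<omega>]\<close>; an element is a pair \<open>(k, \<beta>)\<close> standing
  for \<open>\<beta> w\<^sup>k\<close>, and \<open>B\<close> is a module over the Eisenstein integers \<open>\<int>[\<omega>]\<close>, a dense subring
  of \<open>\<int>\<^sub>3[\<omega>]\<close>. An open subgroup \<open>H\<close> contains some \<open>3\<^sup>N B\<close>.

  Lower bound: if \<open>H\<close> were topologically generated by at most one element, the elements of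
  the generated group lying in \<open>B\<close> would all be integer multiples of a single \<open>y\<^sub>0\<close>
  (the generator lies in \<open>B\<close>, or it has order 3); but \<open>\<int> y\<^sub>0\<close> cannot approximate both
  \<open>3\<^sup>N\<close> and \<open>3\<^sup>N \<omega>\<close> modulo \<open>3\<^sup>2\<^sup>N\<^sup>+\<^sup>1\<close> (a determinant argument). Hence \<open>d(H) \<ge> 2\<close>.

  \<open>H \<subseteq> B\<close>: \<open>H \<inter> \<int>[\<omega>]\<close> is a full lattice in \<open>\<int>\<^sup>2\<close>, generated by two elements, and it is
  dense in \<open>H\<close>; so \<open>d(H) \<le> 2\<close>.

  \<open>H \<nsubseteq> B\<close>: \<open>H\<close> contains some \<open>(1, v\<^sub>0)\<close> with \<open>v\<^sub>0 \<in> \<int>[\<omega>]\<close>, conjugation by which is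
  multiplication by \<open>\<omega>\<close>; so \<open>H \<inter> \<int>[\<omega>]\<close> is an ideal containing \<open>3\<^sup>N\<close>, hence equal to
  \<open>\<lambda>\<^sup>m \<int>[\<omega>]\<close> with \<open>\<lambda> = 1 - \<omega>\<close>. The map \<open>(k, \<beta>) \<mapsto> (k, \<lambda>\<^sup>m \<beta> + c\<^sub>k)\<close>, where
  \<open>(k, c\<^sub>k) = (1, v\<^sub>0)\<^sup>k\<close>, is then a bicontinuous isomorphism \<open>G\<^sub>0 \<cong> H\<close>, and \<open>H\<close> is
  topologically generated by \<open>(1, v\<^sub>0)\<close> and \<open>(0, \<lambda>\<^sup>m)\<close>.
\<close>

section \<open>The Eisenstein integers\<close>

text \<open>\<open>Eis a b\<close> stands for \<open>a + b \<omega>\<close> with \<open>\<omega>\<^sup>2 + \<omega> + 1 = 0\<close>.\<close>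

datatype eis = Eis int int

fun re :: "eis \<Rightarrow> int" where "re (Eis a b) = a"
fun im :: "eis \<Rightarrow> int" where "im (Eis a b) = b"

lemma eis_eq_iff: "x = y \<longleftrightarrow> re x = re y \<and> im x = im y"
  by (cases x; cases y) auto

lemma eis_re_im [simp]: "Eis (re x) (im x) = x"
  by (cases x) auto

instantiation eis :: comm_ring_1
begin
definition "0 = Eis 0 0"
definition "1 = Eis 1 0"
definition "x + y = Eis (re x + re y) (im x + im y)"
definition "x - y = Eis (re x - re y) (im x - im y)"
definition "- x = Eis (- re x) (- im x)"
definition "x * y = Eis (re x * re y - im x * im y) (re x * im y + im x * re y - im x * im y)"
instance
  by standard (auto simp: eis_eq_iff zero_eis_def one_eis_def plus_eis_def minus_eis_def
      uminus_eis_def times_eis_def algebra_simps)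
end

lemma re_simps [simp]:
  "re 0 = 0" "re 1 = 1" "re (x + y) = re x + re y" "re (x - y) = re x - re y"
  "re (- x) = - re x" "re (x * y) = re x * re y - im x * im y"
  by (auto simp: zero_eis_def one_eis_def plus_eis_def minus_eis_def uminus_eis_def times_eis_def)

lemma im_simps [simp]:
  "im 0 = 0" "im 1 = 0" "im (x + y) = im x + im y" "im (x - y) = im x - im y"
  "im (- x) = - im x" "im (x * y) = re x * im y + im x * re y - im x * im y"
  by (auto simp: zero_eis_def one_eis_def plus_eis_def minus_eis_def uminus_eis_def times_eis_def)

lemma re_of_nat [simp]: "re (of_nat n) = int n" and im_of_nat [simp]: "im (of_nat n) = 0"
  by (induction n) auto

lemma re_of_int [simp]: "re (of_int n) = n" and im_of_int [simp]: "im (of_int n) = 0"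
  by (cases n; simp)+

lemma re_numeral [simp]: "re (numeral n) = numeral n" and im_numeral [simp]: "im (numeral n) = 0"
  using re_of_nat[of "numeral n"] im_of_nat[of "numeral n"] by simp_all

lemma re_3pow [simp]: "re (3 ^ m) = 3 ^ m" and im_3pow [simp]: "im (3 ^ m) = 0"
  using re_of_nat[of "3 ^ m"] im_of_nat[of "3 ^ m"] by simp_all

text \<open>The cube root of unity \<open>\<omega>\<close>, the prime \<open>\<lambda> = 1 - \<omega>\<close> above 3, and conjugation
  \<open>\<omega> \<mapsto> \<omega>\<^sup>2\<close>, with \<open>x \<cdot> conj x = N(x) = a\<^sup>2 - ab + b\<^sup>2\<close>.\<close>

definition omega :: eis where "omega = Eis 0 1"
definition lam :: eis where "lam = Eis 1 (-1)"
definition conj :: "eis \<Rightarrow> eis" where "conj x = Eis (re x - im x) (- im x)"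

lemma omega_cube: "omega ^ 3 = 1"
  by (simp add: omega_def eis_eq_iff numeral_3_eq_3)

lemma omega_pow_mod: "omega ^ (k mod 3) = omega ^ k"
proof -
  have "omega ^ k = omega ^ (3 * (k div 3) + k mod 3)" by simp
  also have "\<dots> = omega ^ (k mod 3)" by (simp only: power_add power_mult omega_cube) simp
  finally show ?thesis by simp
qed

lemma conj_mult: "conj (x * y) = conj x * conj y"
  by (simp add: conj_def eis_eq_iff algebra_simps)

lemma mult_conj: "x * conj x = of_int (re x * re x - re x * im x + im x * im x)"
  by (simp add: conj_def eis_eq_iff algebra_simps)

lemma lam_pow_conj: "lam ^ m * conj (lam ^ m) = 3 ^ m"
proof (induction m)
  case 0
  then show ?case by (simp add: conj_def eis_eq_iff)
next
  case (Suc m)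
  have "lam * conj lam = 3" by (simp add: lam_def conj_def eis_eq_iff)
  with Suc show ?case by (simp add: conj_mult algebra_simps) (metis mult.assoc mult.left_commute)
qed

lemma lam_sq: "lam ^ 2 = 3 * (- omega)"
  by (simp add: lam_def omega_def eis_eq_iff power2_eq_square)

section \<open>Ideals of the Eisenstein integers above 3\<close>

lemma of_int_mult_closed:
  fixes I :: "'a :: ring_1 set"
  assumes "0 \<in> I" "\<And>x y. x \<in> I \<Longrightarrow> y \<in> I \<Longrightarrow> x - y \<in> I" "x \<in> I"
  shows "of_int c * x \<in> I"
proof -
  have neg: "- y \<in> I" if "y \<in> I" for y using assms(2)[OF assms(1) that] by simp
  have add: "y + z \<in> I" if "y \<in> I" "z \<in> I" for y z
    using assms(2)[OF that(1) neg[OF that(2)]] by simp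
  have nat: "of_nat n * x \<in> I" for n
    by (induction n) (auto simp: assms algebra_simps intro: add)
  show ?thesis
  proof (cases "c \<ge> 0")
    case True then show ?thesis using nat[of "nat c"] by simp
  next
    case False then show ?thesis using neg[OF nat[of "nat (- c)"]] by simp
  qed
qed

definition eis_ideal :: "eis set \<Rightarrow> bool" where
  "eis_ideal I \<longleftrightarrow> 0 \<in> I \<and> (\<forall>x\<in>I. \<forall>y\<in>I. x + y \<in> I) \<and> (\<forall>x\<in>I. \<forall>r. r * x \<in> I)"

text \<open>Since \<open>\<int>[\<omega>] = \<int> + \<int>\<omega>\<close>, an additive subgroup stable under multiplication by \<open>\<omega>\<close>
  is an ideal.\<close>

lemma eis_idealI:
  assumes "0 \<in> I" "\<And>x y. x \<in> I \<Longrightarrow> y \<in> I \<Longrightarrow> x - y \<in> I" "\<And>x. x \<in> I \<Longrightarrow> omega * x \<in> I"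
  shows "eis_ideal I"
proof -
  have add: "y + z \<in> I" if "y \<in> I" "z \<in> I" for y z
    using assms(2)[OF that(1) assms(2)[OF assms(1) that(2)]] by simp
  have "r * x \<in> I" if "x \<in> I" for r x
  proof -
    have "r * x = of_int (re r) * x + of_int (im r) * (omega * x)"
      by (simp add: eis_eq_iff omega_def algebra_simps)
    then show ?thesis
      using add of_int_mult_closed[OF assms(1,2) that] of_int_mult_closed[OF assms(1,2) assms(3)[OF that]]
      by metis
  qed
  then show ?thesis using assms(1) add unfolding eis_ideal_def by simp
qed

lemma eis_ideal_UNIV: "eis_ideal I \<Longrightarrow> 1 \<in> I \<Longrightarrow> I = UNIV"
  unfolding eis_ideal_def by (metis UNIV_eq_I mult.right_neutral)

lemma lam_dvd_iff: "3 dvd (re x + im x) \<longleftrightarrow> (\<exists>y. x = lam * y)"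
proof
  assume "3 dvd (re x + im x)"
  then obtain d where d: "re x + im x = 3 * d" by (auto simp: dvd_def)
  have "x = lam * Eis (re x - d) d" using d by (simp add: eis_eq_iff lam_def)
  then show "\<exists>y. x = lam * y" by blast
next
  assume "\<exists>y. x = lam * y"
  then obtain y where "x = lam * y" by blast
  then have "re x + im x = 3 * im y" by (simp add: lam_def)
  then show "3 dvd (re x + im x)" by simp
qed

lemma norm_mod3: "3 dvd (a * a - a * b + b * b) \<longleftrightarrow> 3 dvd (a + b)" for a b :: int
proof -
  have e: "a * a - a * b + b * b = (a + b) * (a + b) + (- (a * b)) * 3" by (simp add: algebra_simps)
  have "3 dvd (a * a - a * b + b * b) \<longleftrightarrow> 3 dvd ((a + b) * (a + b))"
    unfolding e by (rule dvd_add_times_triv_right_iff)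
  also have "\<dots> \<longleftrightarrow> 3 dvd (a + b)" using prime_dvd_mult_iff[of "3::int" "a + b" "a + b"] by simp
  finally show ?thesis .
qed

text \<open>An ideal containing a power of 3 and an element not divisible by \<open>\<lambda>\<close> is everything:
  the norm of that element is coprime to 3 and lies in the ideal.\<close>

lemma eis_ideal_coprime_unit:
  assumes I: "eis_ideal I" "3 ^ k \<in> I" and u: "u \<in> I" "\<not> 3 dvd (re u + im u)"
  shows "I = UNIV"
proof -
  let ?N = "re u * re u - re u * im u + im u * im u"
  have NI: "of_int ?N \<in> I" using u(1) I(1) mult_conj[of u] unfolding eis_ideal_def by (metis mult.commute)
  have "\<not> 3 dvd ?N" using u(2) norm_mod3 by blast
  then have "coprime ?N 3" using prime_imp_coprime[of "3::int" ?N] by (simp add: coprime_commute)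
  then have "coprime ?N (3 ^ k)" by simp
  then obtain s t where "s * ?N + t * 3 ^ k = 1" by (metis bezout_int coprime_iff_gcd_eq_1)
  then have "of_int s * of_int ?N + of_int t * 3 ^ k = (1::eis)"
    by (metis of_int_1 of_int_add of_int_mult of_int_numeral of_int_power)
  then have "1 \<in> I" using I NI unfolding eis_ideal_def by metis
  with I(1) show ?thesis by (rule eis_ideal_UNIV)
qed

text \<open>\<open>\<int>[\<omega>]\<close> is local at 3: every ideal containing a power of \<open>\<lambda>\<close> is a power of \<open>\<lambda>\<close>.\<close>

lemma eis_ideal_lam_power:
  assumes "eis_ideal I" "lam ^ k \<in> I"
  shows "\<exists>m. I = {lam ^ m * r | r. True}"
  using assms
proof (induction k arbitrary: I)
  case 0
  then have "I = UNIV" using eis_ideal_UNIV[of I] by simp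
  then show ?case by (intro exI[of _ 0]) auto
next
  case (Suc k)
  show ?case
  proof (cases "\<exists>u\<in>I. \<not> 3 dvd (re u + im u)")
    case True
    have "3 ^ Suc k \<in> I"
      using Suc.prems lam_pow_conj[of "Suc k"] unfolding eis_ideal_def by (metis mult.commute)
    then have "I = UNIV" using True eis_ideal_coprime_unit[OF Suc.prems(1)] by blast
    then show ?thesis by (intro exI[of _ 0]) auto
  next
    case False
    then have all_lam: "\<forall>x\<in>I. \<exists>y. x = lam * y" using lam_dvd_iff by blast
    define I' where "I' = {y. lam * y \<in> I}"
    have "eis_ideal I'"
      using Suc.prems(1) unfolding eis_ideal_def I'_def by (simp add: distrib_left mult.left_commute)
    moreover have "lam ^ k \<in> I'" using Suc.prems unfolding I'_def by simp
    ultimately obtain m where m: "I' = {lam ^ m * r | r. True}" using Suc.IH by blast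
    have "I = {lam ^ Suc m * r | r. True}"
    proof (intro equalityI subsetI)
      fix x assume "x \<in> I"
      then obtain y where "x = lam * y" using all_lam by blast
      with \<open>x \<in> I\<close> have "y \<in> I'" unfolding I'_def by simp
      then show "x \<in> {lam ^ Suc m * r | r. True}" using m \<open>x = lam * y\<close> by (auto simp: mult.assoc)
    next
      fix x assume "x \<in> {lam ^ Suc m * r | r. True}"
      then obtain r where "x = lam * (lam ^ m * r)" by (auto simp: mult.assoc)
      moreover have "lam ^ m * r \<in> I'" using m by blast
      ultimately show "x \<in> I" unfolding I'_def by simp
    qed
    then show ?thesis by blast
  qed
qed

section \<open>The module \<open>B = \<int>\<^sub>3 \<oplus> \<int>\<^sub>3 \<omega>\<close> over the Eisenstein integers\<close>

text \<open>Residues of integer expressions are computed by erasing inner reductions mod \<open>m\<close>: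
  to show \<open>a mod m = b mod m\<close>, rewrite both sides up to congruence into a common normal form.\<close>

lemma mod_eq_by_cong: "[a = x] (mod m) \<Longrightarrow> [b = y] (mod m) \<Longrightarrow> x = y \<Longrightarrow> a mod m = b mod m"
  for a b x y m :: int
  by (simp add: cong_def)

lemmas cong_normalize =
  cong_mod_leftI cong_add cong_diff cong_mult cong_minus_minus_iff[THEN iffD2] cong_refl

lemma zp_memD: "x \<in> zp \<Longrightarrow> 0 \<le> x n \<and> x n < 3 ^ n \<and> x n = x (Suc n) mod 3 ^ n"
  unfolding zp_def by blast

lemma zp_mod [simp]: "x \<in> zp \<Longrightarrow> x n mod 3 ^ n = x n"
  using zp_memD[of x n] by (simp add: mod_pos_pos_trivial)

lemma zp_coherent:
  assumes "x \<in> zp" "n \<le> m"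
  shows "x m mod 3 ^ n = x n"
  using assms(2)
proof (induction m)
  case 0
  then show ?case using zp_mod[OF assms(1), of 0] by simp
next
  case (Suc m)
  show ?case
  proof (cases "n = Suc m")
    case True
    then show ?thesis using zp_mod[OF assms(1), of "Suc m"] by simp
  next
    case False
    then have "n \<le> m" using Suc.prems by simp
    have "x (Suc m) mod 3 ^ n = x (Suc m) mod 3 ^ m mod 3 ^ n"
      using \<open>n \<le> m\<close> by (simp add: mod_mod_cancel le_imp_power_dvd)
    also have "\<dots> = x m mod 3 ^ n" using zp_memD[OF assms(1), of m] by simp
    finally show ?thesis using Suc.IH[OF \<open>n \<le> m\<close>] by simp
  qed
qed

lemma zpI:
  assumes "\<And>n. f n = g n mod 3 ^ n" "\<And>n. g (Suc n) mod 3 ^ n = g n mod 3 ^ n"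
  shows "f \<in> zp"
proof -
  have "f n = f (Suc n) mod 3 ^ n" for n
  proof -
    have "f (Suc n) mod 3 ^ n = g (Suc n) mod 3 ^ Suc n mod 3 ^ n" by (simp only: assms(1))
    also have "\<dots> = g (Suc n) mod 3 ^ n" by (rule mod_mod_cancel) simp
    also have "\<dots> = f n" by (simp only: assms)
    finally show ?thesis by simp
  qed
  moreover have "0 \<le> f n \<and> f n < 3 ^ n" for n by (simp only: assms(1)) simp
  ultimately show ?thesis unfolding zp_def by blast
qed

definition zp_lin :: "int \<Rightarrow> int \<Rightarrow> (nat \<Rightarrow> int) \<Rightarrow> (nat \<Rightarrow> int) \<Rightarrow> (nat \<Rightarrow> int)" where
  "zp_lin c d x y = (\<lambda>n. (c * x n + d * y n) mod 3 ^ n)"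

definition zp_const :: "int \<Rightarrow> (nat \<Rightarrow> int)" where
  "zp_const k = (\<lambda>n. k mod 3 ^ n)"

lemma zp_lin_zp [simp]: "x \<in> zp \<Longrightarrow> y \<in> zp \<Longrightarrow> zp_lin c d x y \<in> zp"
  unfolding zp_lin_def
proof (rule zpI[where g = "\<lambda>n. c * x n + d * y n"])
  fix n
  assume "x \<in> zp" "y \<in> zp"
  have hx: "x (Suc n) mod 3 ^ n = x n" and hy: "y (Suc n) mod 3 ^ n = y n"
    using zp_memD[OF \<open>x \<in> zp\<close>, of n] zp_memD[OF \<open>y \<in> zp\<close>, of n] by simp_all
  have "(c * x (Suc n) + d * y (Suc n)) mod 3 ^ n
      = (c * (x (Suc n) mod 3 ^ n) + d * (y (Suc n) mod 3 ^ n)) mod 3 ^ n"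
    by (rule mod_eq_by_cong[where x = "c * x (Suc n) + d * y (Suc n)"], (rule cong_normalize)+, simp)
  then show "(c * x (Suc n) + d * y (Suc n)) mod 3 ^ n = (c * x n + d * y n) mod 3 ^ n"
    by (simp only: hx hy)
qed simp

lemma zp_const_zp [simp]: "zp_const k \<in> zp"
  unfolding zp_const_def by (rule zpI[where g = "\<lambda>n. k"]) (simp_all add: mod_mod_cancel)

lemma zp_add_zp [simp]: "x \<in> zp \<Longrightarrow> y \<in> zp \<Longrightarrow> zp_add x y \<in> zp"
  using zp_lin_zp[of x y 1 1] by (simp add: zp_add_def zp_lin_def)

lemma zp_neg_zp [simp]: "x \<in> zp \<Longrightarrow> zp_neg x \<in> zp"
  using zp_lin_zp[of x x "-1" 0] by (simp add: zp_neg_def zp_lin_def)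

lemma zp_zero_zp [simp]: "zp_zero \<in> zp"
  by (simp add: zp_def zp_zero_def)

text \<open>\<open>B\<close> as pairs \<open>(a, b)\<close> of 3-adic integers standing for \<open>a + b \<omega>\<close>, with its additive
  structure, the action \<open>smul\<close> of \<open>\<int>[\<omega>]\<close> and the dense embedding \<open>emb : \<int>[\<omega>] \<rightarrow> B\<close>.\<close>

type_synonym bvec = "(nat \<Rightarrow> int) \<times> (nat \<Rightarrow> int)"

definition Bvec :: "bvec set" where "Bvec = zp \<times> zp"

definition vadd :: "bvec \<Rightarrow> bvec \<Rightarrow> bvec" where
  "vadd p q = (zp_add (fst p) (fst q), zp_add (snd p) (snd q))"

definition vneg :: "bvec \<Rightarrow> bvec" where
  "vneg p = (zp_neg (fst p), zp_neg (snd p))"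

definition vzero :: bvec where
  "vzero = (zp_zero, zp_zero)"

definition smul :: "eis \<Rightarrow> bvec \<Rightarrow> bvec" where
  "smul r p = (zp_lin (re r) (- im r) (fst p) (snd p), zp_lin (im r) (re r - im r) (fst p) (snd p))"

definition emb :: "eis \<Rightarrow> bvec" where
  "emb z = (zp_const (re z), zp_const (im z))"

lemma Bvec_iff: "p \<in> Bvec \<longleftrightarrow> fst p \<in> zp \<and> snd p \<in> zp"
  by (cases p) (simp add: Bvec_def)

lemma vadd_Bvec [simp]: "p \<in> Bvec \<Longrightarrow> q \<in> Bvec \<Longrightarrow> vadd p q \<in> Bvec"
  and vneg_Bvec [simp]: "p \<in> Bvec \<Longrightarrow> vneg p \<in> Bvec"
  and vzero_Bvec [simp]: "vzero \<in> Bvec"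
  and smul_Bvec [simp]: "p \<in> Bvec \<Longrightarrow> smul r p \<in> Bvec"
  and emb_Bvec [simp]: "emb z \<in> Bvec"
  by (simp_all add: Bvec_iff vadd_def vneg_def vzero_def smul_def emb_def)

lemma coord_simps:
  "fst (vadd p q) n = (fst p n + fst q n) mod 3 ^ n" "snd (vadd p q) n = (snd p n + snd q n) mod 3 ^ n"
  "fst (vneg p) n = (- fst p n) mod 3 ^ n" "snd (vneg p) n = (- snd p n) mod 3 ^ n"
  "fst vzero n = 0" "snd vzero n = 0"
  "fst (smul r p) n = (re r * fst p n + - im r * snd p n) mod 3 ^ n"
  "snd (smul r p) n = (im r * fst p n + (re r - im r) * snd p n) mod 3 ^ n"
  "fst (emb z) n = re z mod 3 ^ n" "snd (emb z) n = im z mod 3 ^ n"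
  by (simp_all add: vadd_def zp_add_def vneg_def zp_neg_def vzero_def zp_zero_def smul_def
      zp_lin_def emb_def zp_const_def)

text \<open>The module laws; each is an identity between residues of integer polynomials.\<close>

lemma smul_smul: "smul r (smul s p) = smul (r * s) p"
  and smul_vadd: "smul r (vadd p q) = vadd (smul r p) (smul r q)"
  and smul_add: "smul (r + s) p = vadd (smul r p) (smul s p)"
  and smul_vneg: "smul r (vneg p) = vneg (smul r p)"
  and smul_uminus: "smul (- r) p = vneg (smul r p)"
  and smul_emb: "smul r (emb z) = emb (r * z)"
  and emb_add: "emb (z + w) = vadd (emb z) (emb w)"
  and emb_neg: "emb (- z) = vneg (emb z)"
  and vadd_assoc: "vadd (vadd p q) u = vadd p (vadd q u)"
  and vadd_cancel: "vadd (vneg (vadd p u)) (vadd q u) = vadd (vneg p) q"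
  by (intro prod_eqI ext; simp only: coord_simps;
      rule mod_eq_by_cong, (rule cong_normalize)+, simp add: algebra_simps)+

lemma smul_one: "p \<in> Bvec \<Longrightarrow> smul 1 p = p"
  and smul_zero: "smul 0 p = vzero"
  and smul_vzero: "smul r vzero = vzero"
  and emb_zero: "emb 0 = vzero"
  and vadd_zero: "p \<in> Bvec \<Longrightarrow> vadd vzero p = p"
  and vadd_zero_right: "p \<in> Bvec \<Longrightarrow> vadd p vzero = p"
  and vadd_vneg: "vadd (vneg p) p = vzero"
  and vadd_vneg_right: "vadd p (vneg p) = vzero"
  by (intro prod_eqI ext; simp add: coord_simps Bvec_iff mod_add_left_eq mod_add_right_eq)+

lemma vadd_comm: "vadd p q = vadd q p"
  unfolding vadd_def zp_add_def by (simp add: add.commute)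

lemma vadd_swap: "vadd (vadd p u) (vadd q r) = vadd (vadd p q) (vadd u r)"
  by (metis vadd_assoc vadd_comm)

lemma vadd_vneg_cancel: "p \<in> Bvec \<Longrightarrow> vadd (vadd p (vneg q)) q = p"
  by (simp add: vadd_assoc vadd_vneg vadd_zero_right)

lemma vadd_cancel_right: "p \<in> Bvec \<Longrightarrow> vadd (vadd p q) (vneg q) = p"
  by (simp add: vadd_assoc vadd_vneg_right vadd_zero_right)

lemma vadd_vneg_left: "q \<in> Bvec \<Longrightarrow> vadd p (vadd (vneg p) q) = q"
  by (simp add: vadd_assoc[symmetric] vadd_vneg_right vadd_zero)

lemma om_smul: "om p = smul omega p"
  unfolding om_def smul_def zp_lin_def omega_def zp_neg_def zp_add_def
  by (cases p) (simp add: fun_eq_iff, rule allI,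
      (rule mod_eq_by_cong, (rule cong_normalize)+, simp add: algebra_simps))

lemma om_pow: "p \<in> Bvec \<Longrightarrow> (om ^^ k) p = smul (omega ^ k) p"
  by (induction k) (simp_all add: smul_one om_smul smul_smul mult.commute)

section \<open>The group \<open>G\<^sub>0\<close>\<close>

lemma G0_carrier: "x \<in> carrier G0 \<longleftrightarrow> fst x < 3 \<and> snd x \<in> Bvec"
  by (cases x) (auto simp: G0_def Bvec_iff)

lemma B_iff: "x \<in> B \<longleftrightarrow> fst x = 0 \<and> snd x \<in> Bvec"
  by (cases x) (auto simp: B_def Bvec_iff)

lemma G0_one: "\<one>\<^bsub>G0\<^esub> = (0, vzero)"
  by (simp add: G0_def vzero_def)

lemma G0_mult: "q \<in> Bvec \<Longrightarrow> (k, p) \<otimes>\<^bsub>G0\<^esub> (l, q) = ((k + l) mod 3, vadd p (smul (omega ^ k) q))"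
  by (simp add: G0_def g0_mult_def vadd_def om_pow split: prod.split)

lemma B_mult: "q \<in> Bvec \<Longrightarrow> k < 3 \<Longrightarrow> (0, p) \<otimes>\<^bsub>G0\<^esub> (k, q) = (k, vadd p q)"
  by (simp add: G0_mult smul_one)

text \<open>\<open>G\<^sub>0\<close> is a group: associativity reduces to \<open>\<omega>\<^sup>k\<^sup>+\<^sup>l = \<omega>\<^sup>k \<omega>\<^sup>l\<close> (as \<open>\<omega>\<^sup>3 = 1\<close>), and
  \<open>(k, p)\<close> has inverse \<open>(-k, -\<omega>\<^sup>-\<^sup>k p)\<close>.\<close>

lemma group_G0: "group G0"
proof (rule groupI)
  fix x y assume "x \<in> carrier G0" "y \<in> carrier G0"
  then show "x \<otimes>\<^bsub>G0\<^esub> y \<in> carrier G0"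
    by (cases x; cases y) (simp add: G0_carrier G0_mult)
next
  show "\<one>\<^bsub>G0\<^esub> \<in> carrier G0" by (simp add: G0_one G0_carrier)
next
  fix x y z assume "x \<in> carrier G0" "y \<in> carrier G0" "z \<in> carrier G0"
  then obtain k p l q j r where xyz: "x = (k, p)" "y = (l, q)" "z = (j, r)"
    "k < 3" "l < 3" "j < 3" "p \<in> Bvec" "q \<in> Bvec" "r \<in> Bvec"
    by (cases x; cases y; cases z) (auto simp: G0_carrier)
  have e1: "((k + l) mod 3 + j) mod 3 = (k + (l + j) mod 3) mod 3" by presburger
  have e2: "omega ^ ((k + l) mod 3) = omega ^ k * omega ^ l" by (simp add: omega_pow_mod power_add)
  show "x \<otimes>\<^bsub>G0\<^esub> y \<otimes>\<^bsub>G0\<^esub> z = x \<otimes>\<^bsub>G0\<^esub> (y \<otimes>\<^bsub>G0\<^esub> z)"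
    using xyz by (simp add: G0_mult e1 e2 vadd_assoc smul_vadd smul_smul)
next
  fix x assume "x \<in> carrier G0"
  then show "\<one>\<^bsub>G0\<^esub> \<otimes>\<^bsub>G0\<^esub> x = x"
    by (cases x) (simp add: G0_one G0_carrier G0_mult smul_one vadd_zero)
next
  fix x assume "x \<in> carrier G0"
  then obtain k p where x: "x = (k, p)" "k < 3" "p \<in> Bvec" by (cases x) (auto simp: G0_carrier)
  define j where "j = (3 - k) mod 3"
  have "k = 0 \<or> k = 1 \<or> k = 2" using x(2) by auto
  then have j: "j < 3" "(j + k) mod 3 = 0" by (auto simp: j_def)
  let ?y = "(j, smul (omega ^ j) (vneg p))"
  have "?y \<otimes>\<^bsub>G0\<^esub> x = \<one>\<^bsub>G0\<^esub>"
    using x j by (simp add: G0_mult G0_one smul_vadd[symmetric] vadd_vneg smul_vzero)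
  moreover have "?y \<in> carrier G0" using x j by (simp add: G0_carrier)
  ultimately show "\<exists>y\<in>carrier G0. y \<otimes>\<^bsub>G0\<^esub> x = \<one>\<^bsub>G0\<^esub>" by blast
qed

interpretation G: group G0
  by (rule group_G0)

lemma G0_inv_B: "p \<in> Bvec \<Longrightarrow> inv\<^bsub>G0\<^esub> (0, p) = (0, vneg p)"
  by (rule G.inv_equality) (simp_all add: G0_mult G0_one G0_carrier smul_one vadd_vneg)

lemma emb_mult: "(0, emb z) \<otimes>\<^bsub>G0\<^esub> (0, emb w) = (0, emb (z + w))"
  by (simp add: B_mult emb_add)

lemma emb_inv: "inv\<^bsub>G0\<^esub> (0, emb z) = (0, emb (- z))"
  by (simp add: G0_inv_B emb_neg)

text \<open>Every element outside \<open>B\<close> has order 3, since \<open>1 + \<omega>\<^sup>k + \<omega>\<^sup>2\<^sup>k = 0\<close> for \<open>k = 1, 2\<close>.\<close>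

lemma G0_order3:
  assumes "x \<in> carrier G0" "fst x \<noteq> 0"
  shows "x \<otimes>\<^bsub>G0\<^esub> (x \<otimes>\<^bsub>G0\<^esub> x) = \<one>\<^bsub>G0\<^esub>"
proof -
  obtain k p where x: "x = (k, p)" "p \<in> Bvec" "k < 3" "k \<noteq> 0"
    using assms by (cases x) (auto simp: G0_carrier)
  then have k: "k = 1 \<or> k = 2" by auto
  have "x \<otimes>\<^bsub>G0\<^esub> (x \<otimes>\<^bsub>G0\<^esub> x)
      = ((k + (k + k) mod 3) mod 3, smul (1 + omega ^ k + omega ^ k * omega ^ k) p)"
    using x by (simp add: G0_mult smul_vadd smul_smul smul_add smul_one vadd_assoc)
  also have "1 + omega ^ k + omega ^ k * omega ^ k = 0"
    using k by (auto simp: omega_def eis_eq_iff numeral_2_eq_2)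
  also have "(k + (k + k) mod 3) mod 3 = 0" using k by auto
  finally show ?thesis by (simp add: smul_zero G0_one)
qed

section \<open>Neighbourhoods of the identity\<close>

text \<open>\<open>NB K = 3\<^sup>K B\<close>, the elements of \<open>B\<close> whose coordinates vanish at level \<open>K\<close>; and the
  integral truncation \<open>trunc K p \<in> \<int>[\<omega>]\<close> of \<open>p\<close>, which approximates \<open>p\<close> modulo \<open>3\<^sup>K\<close>.\<close>

definition NB :: "nat \<Rightarrow> bvec set" where
  "NB K = {p \<in> Bvec. fst p K = 0 \<and> snd p K = 0}"

definition trunc :: "nat \<Rightarrow> bvec \<Rightarrow> eis" where
  "trunc K p = Eis (fst p K) (snd p K)"

lemma Nbh_iff: "x \<in> Nbh K \<longleftrightarrow> fst x = 0 \<and> snd x \<in> NB K"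
  by (cases x) (auto simp: Nbh_def NB_def Bvec_iff)

lemma NB_Bvec: "p \<in> NB K \<Longrightarrow> p \<in> Bvec"
  by (simp add: NB_def)

lemma NB_anti: "n \<le> K \<Longrightarrow> NB K \<subseteq> NB n"
proof
  fix p assume "n \<le> K" "p \<in> NB K"
  then show "p \<in> NB n"
    using zp_coherent[of "fst p" n K] zp_coherent[of "snd p" n K] by (simp add: NB_def Bvec_iff)
qed

lemma Nbh_anti: "n \<le> K \<Longrightarrow> Nbh K \<subseteq> Nbh n"
  using NB_anti[of n K] by (auto simp: Nbh_iff)

lemma NB_vzero: "vzero \<in> NB K"
  and NB_smul: "p \<in> NB K \<Longrightarrow> smul r p \<in> NB K"
  by (simp_all add: NB_def coord_simps)

lemma emb_NB: "emb z \<in> NB K \<longleftrightarrow> 3 ^ K dvd re z \<and> 3 ^ K dvd im z"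
  by (simp add: NB_def coord_simps dvd_eq_mod_eq_0)

lemma trunc_close: "p \<in> Bvec \<Longrightarrow> vadd (vneg (emb (trunc K p))) p \<in> NB K"
  and trunc_close_sym: "p \<in> Bvec \<Longrightarrow> vadd (vneg p) (emb (trunc K p)) \<in> NB K"
proof -
  assume p: "p \<in> Bvec"
  then have "fst p \<in> zp" "snd p \<in> zp" by (simp_all add: Bvec_iff)
  with p show "vadd (vneg (emb (trunc K p))) p \<in> NB K" "vadd (vneg p) (emb (trunc K p)) \<in> NB K"
    by (simp_all add: NB_def coord_simps trunc_def mod_add_left_eq mod_add_right_eq)
qed

lemma trunc_decomp: "p \<in> Bvec \<Longrightarrow> p = vadd (emb (trunc K p)) (vadd (vneg (emb (trunc K p))) p)"
  by (simp add: vadd_vneg_left)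

lemma NB_all: "p \<in> Bvec \<Longrightarrow> (\<And>n. p \<in> NB n) \<Longrightarrow> p = vzero"
  by (cases p) (auto simp: NB_def Bvec_iff vzero_def zp_zero_def)

lemma zp_div:
  assumes x: "x \<in> zp" "x m = 0"
  shows "(\<lambda>n. x (n + m) div 3 ^ m) \<in> zp \<and> x = (\<lambda>n. (3 ^ m * (x (n + m) div 3 ^ m)) mod 3 ^ n)"
proof -
  define y where "y = (\<lambda>n. x (n + m) div 3 ^ m)"
  have xy: "x (n + m) = 3 ^ m * y n" for n
  proof -
    have "x (n + m) mod 3 ^ m = x m" using zp_coherent[OF x(1), of m "n + m"] by simp
    then have "x (n + m) mod 3 ^ m = 0" using x(2) by simp
    then show ?thesis unfolding y_def by (metis add.right_neutral mult_div_mod_eq)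
  qed
  have pos: "(0::int) < 3 ^ m" by simp
  have "y \<in> zp" unfolding zp_def
  proof (intro CollectI allI conjI)
    fix n
    have b: "0 \<le> x (n + m) \<and> x (n + m) < 3 ^ (n + m)" using zp_memD[OF x(1)] by blast
    show "0 \<le> y n" using b xy[of n] pos by (metis zero_le_mult_iff not_less)
    have "3 ^ m * y n < 3 ^ m * 3 ^ n" using b xy[of n] by (simp add: power_add mult.commute)
    then show "y n < 3 ^ n" using pos by simp
    have "x (n + m) = x (Suc n + m) mod 3 ^ (n + m)"
      using zp_coherent[OF x(1), of "n + m" "Suc n + m"] by simp
    moreover have "x (Suc n + m) = 3 ^ m * y (Suc n)" by (rule xy)
    ultimately have "3 ^ m * y n = (3 ^ m * y (Suc n)) mod (3 ^ m * 3 ^ n)"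
      by (simp only: xy power_add mult.commute)
    also have "\<dots> = 3 ^ m * (y (Suc n) mod 3 ^ n)" by (rule mod_mult_mult1)
    finally show "y n = y (Suc n) mod 3 ^ n" using pos by simp
  qed
  moreover have "x = (\<lambda>n. (3 ^ m * y n) mod 3 ^ n)"
  proof
    fix n show "x n = (3 ^ m * y n) mod 3 ^ n"
      using zp_coherent[OF x(1), of n "n + m"] xy[of n] by simp
  qed
  ultimately show ?thesis unfolding y_def by simp
qed

lemma NB_div: "p \<in> NB m \<Longrightarrow> \<exists>y \<in> Bvec. p = smul (3 ^ m) y"
proof -
  assume "p \<in> NB m"
  then obtain a b where p: "p = (a, b)" "a \<in> zp" "b \<in> zp" "a m = 0" "b m = 0"
    by (cases p) (auto simp: NB_def Bvec_iff)
  define ya where "ya = (\<lambda>n. a (n + m) div 3 ^ m)"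
  define yb where "yb = (\<lambda>n. b (n + m) div 3 ^ m)"
  have A: "ya \<in> zp" "a = (\<lambda>n. (3 ^ m * ya n) mod 3 ^ n)"
    using zp_div[OF p(2) p(4)] unfolding ya_def by blast+
  have B: "yb \<in> zp" "b = (\<lambda>n. (3 ^ m * yb n) mod 3 ^ n)"
    using zp_div[OF p(3) p(5)] unfolding yb_def by blast+
  have "p = smul (3 ^ m) (ya, yb)" using p(1) A(2) B(2) by (simp add: smul_def zp_lin_def)
  then show ?thesis using A(1) B(1) by (auto simp: Bvec_iff)
qed

text \<open>\<open>B\<close> is torsion-free: \<open>3\<^sup>m y \<in> 3\<^sup>n\<^sup>+\<^sup>m B\<close> implies \<open>y \<in> 3\<^sup>n B\<close>; since
  \<open>\<lambda>\<^sup>m\<close> divides \<open>3\<^sup>m\<close>, the same holds for \<open>\<lambda>\<^sup>m\<close>.\<close>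

lemma zp_3pow_cancel:
  assumes "y \<in> zp" "(3 ^ m * y (n + m)) mod 3 ^ (n + m) = 0"
  shows "y n = 0"
proof -
  have "(3::int) ^ m * 3 ^ n dvd 3 ^ m * y (n + m)"
    using assms(2) by (simp add: power_add dvd_eq_mod_eq_0)
  then have "(3::int) ^ n dvd y (n + m)" by simp
  then have "y (n + m) mod 3 ^ n = 0" by (simp add: dvd_eq_mod_eq_0)
  then show ?thesis using zp_coherent[OF assms(1), of n "n + m"] by simp
qed

lemma NB_lam_cancel:
  assumes "y \<in> Bvec" "smul (lam ^ m) y \<in> NB (n + m)"
  shows "y \<in> NB n"
proof -
  have "smul (conj (lam ^ m)) (smul (lam ^ m) y) \<in> NB (n + m)" using assms(2) by (rule NB_smul)
  then have "smul (3 ^ m) y \<in> NB (n + m)" by (simp add: smul_smul mult.commute lam_pow_conj)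
  then show ?thesis
    using assms(1) zp_3pow_cancel[of "fst y" m n] zp_3pow_cancel[of "snd y" m n]
    by (auto simp: NB_def coord_simps Bvec_iff)
qed

section \<open>Closures and open subgroups\<close>

lemma closure_sub: "g0_closure A \<subseteq> A <#>\<^bsub>G0\<^esub> Nbh K"
  unfolding g0_closure_def by blast

lemma set_mult_mono: "A \<subseteq> A' \<Longrightarrow> N \<subseteq> N' \<Longrightarrow> A <#>\<^bsub>G0\<^esub> N \<subseteq> A' <#>\<^bsub>G0\<^esub> N'"
  unfolding set_mult_def by blast

lemma subgroup_set_mult: "subgroup H G0 \<Longrightarrow> H <#>\<^bsub>G0\<^esub> H \<subseteq> H"
  unfolding set_mult_def by (auto intro: subgroup.m_closed)

text \<open>An open subgroup is closed, so it contains the closure of each of its subsets.\<close>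

lemma closure_in_open:
  assumes "subgroup H G0" "Nbh N \<subseteq> H" "A \<subseteq> H"
  shows "g0_closure A \<subseteq> H"
proof -
  have "g0_closure A \<subseteq> H <#>\<^bsub>G0\<^esub> H"
    using closure_sub[of A N] set_mult_mono[OF assms(3) assms(2)] by blast
  also have "\<dots> \<subseteq> H" by (rule subgroup_set_mult[OF assms(1)])
  finally show ?thesis .
qed

text \<open>Since the neighbourhoods shrink, it suffices to approximate from some level on.\<close>

lemma closureI:
  assumes "\<And>K. K \<ge> K0 \<Longrightarrow> x \<in> A <#>\<^bsub>G0\<^esub> Nbh K"
  shows "x \<in> g0_closure A"
  unfolding g0_closure_def
proof
  fix K
  have "x \<in> A <#>\<^bsub>G0\<^esub> Nbh (max K K0)" using assms by simp
  also have "\<dots> \<subseteq> A <#>\<^bsub>G0\<^esub> Nbh K" by (rule set_mult_mono) (simp_all add: Nbh_anti)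
  finally show "x \<in> A <#>\<^bsub>G0\<^esub> Nbh K" .
qed

lemma right_approx:
  assumes "k < 3" "p \<in> Bvec" "q \<in> Bvec" "vadd (vneg q) p \<in> NB K" "(k, q) \<in> A"
  shows "(k, p) \<in> A <#>\<^bsub>G0\<^esub> Nbh K"
proof -
  define j where "j = (3 - k) mod 3"
  have "k = 0 \<or> k = 1 \<or> k = 2" using assms(1) by auto
  then have j: "(k + j) mod 3 = 0" by (auto simp: j_def)
  define \<nu> where "\<nu> = smul (omega ^ j) (vadd (vneg q) p)"
  have nu: "\<nu> \<in> NB K" unfolding \<nu>_def using assms(4) by (rule NB_smul)
  have "(k, q) \<otimes>\<^bsub>G0\<^esub> (0, \<nu>) = (k, vadd q (smul (omega ^ k * omega ^ j) (vadd (vneg q) p)))"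
    using assms(1) NB_Bvec[OF nu] by (simp add: G0_mult \<nu>_def smul_smul)
  also have "omega ^ k * omega ^ j = 1"
    using j omega_pow_mod[of "k + j"] by (simp add: power_add)
  also have "vadd q (smul 1 (vadd (vneg q) p)) = p"
    using assms(2,3) by (simp add: smul_one vadd_vneg_left)
  finally have "(k, p) = (k, q) \<otimes>\<^bsub>G0\<^esub> (0, \<nu>)" by simp
  moreover have "(0, \<nu>) \<in> Nbh K" using nu by (simp add: Nbh_iff)
  ultimately show ?thesis unfolding set_mult_def using assms(5) by blast
qed

lemma approx_in:
  assumes "subgroup H G0" "Nbh K \<subseteq> H" "(k, p) \<in> H" "q \<in> Bvec" "vadd (vneg p) q \<in> NB K"
  shows "(k, q) \<in> H"
proof -
  have "(k, p) \<in> carrier G0" using assms(1,3) subgroup.subset by blast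
  then have "k < 3" "p \<in> Bvec" by (simp_all add: G0_carrier)
  then have "(k, q) \<in> {(k, p)} <#>\<^bsub>G0\<^esub> Nbh K" using right_approx[of k q p K "{(k, p)}"] assms(4,5) by simp
  also have "\<dots> \<subseteq> H <#>\<^bsub>G0\<^esub> H" using assms(2,3) by (intro set_mult_mono) auto
  also have "\<dots> \<subseteq> H" by (rule subgroup_set_mult[OF assms(1)])
  finally show ?thesis .
qed

lemma generate_subset_closed:
  assumes "\<one>\<^bsub>G0\<^esub> \<in> T" "\<And>h. h \<in> S \<Longrightarrow> h \<in> T" "\<And>h. h \<in> S \<Longrightarrow> inv\<^bsub>G0\<^esub> h \<in> T"
    "\<And>a b. a \<in> T \<Longrightarrow> b \<in> T \<Longrightarrow> a \<otimes>\<^bsub>G0\<^esub> b \<in> T"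
  shows "generate G0 S \<subseteq> T"
proof
  fix x assume "x \<in> generate G0 S"
  then show "x \<in> T" by induction (auto intro: assms)
qed

lemma int_points_subgroup:
  assumes "subgroup T G0"
  shows "0 \<in> {z. (0, emb z) \<in> T}"
    and "\<And>x y. x \<in> {z. (0, emb z) \<in> T} \<Longrightarrow> y \<in> {z. (0, emb z) \<in> T} \<Longrightarrow> x - y \<in> {z. (0, emb z) \<in> T}"
proof -
  show "0 \<in> {z. (0, emb z) \<in> T}" using subgroup.one_closed[OF assms] by (simp add: G0_one emb_zero)
  fix x y assume "x \<in> {z. (0, emb z) \<in> T}" "y \<in> {z. (0, emb z) \<in> T}"
  then have "(0, emb x) \<otimes>\<^bsub>G0\<^esub> inv\<^bsub>G0\<^esub> (0, emb y) \<in> T"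
    using subgroup.m_closed[OF assms] subgroup.m_inv_closed[OF assms] by simp
  then show "x - y \<in> {z. (0, emb z) \<in> T}" by (simp add: emb_inv emb_mult)
qed

section \<open>Lower bound: open subgroups need two generators\<close>

definition int_multiples :: "bvec \<Rightarrow> g0elt set" where
  "int_multiples y0 = {(0, smul (of_int k) y0) | k. True}"

lemma generate_B_element:
  assumes "y0 \<in> Bvec"
  shows "generate G0 {(0::nat, y0)} \<subseteq> int_multiples y0"
proof (rule generate_subset_closed)
  show "\<one>\<^bsub>G0\<^esub> \<in> int_multiples y0"
    by (auto simp: int_multiples_def G0_one smul_zero intro: exI[of _ 0])
next
  fix h assume h: "h \<in> {(0::nat, y0)}"
  then show "h \<in> int_multiples y0"
    using assms by (auto simp: int_multiples_def smul_one intro!: exI[of _ 1])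
  show "inv\<^bsub>G0\<^esub> h \<in> int_multiples y0"
    using h assms by (auto simp: int_multiples_def smul_one smul_uminus G0_inv_B intro!: exI[of _ "-1"])
next
  fix a b assume "a \<in> int_multiples y0" "b \<in> int_multiples y0"
  then obtain i j where "a = (0, smul (of_int i) y0)" "b = (0, smul (of_int j) y0)"
    by (auto simp: int_multiples_def)
  then have "a \<otimes>\<^bsub>G0\<^esub> b = (0, smul (of_int (i + j)) y0)"
    using assms by (simp add: G0_mult smul_one smul_add)
  then show "a \<otimes>\<^bsub>G0\<^esub> b \<in> int_multiples y0" unfolding int_multiples_def by blast
qed

text \<open>An element \<open>x \<notin> B\<close> has order 3, so it generates \<open>{1, x, x\<^sup>2}\<close>, which meets \<open>B\<close> only in \<open>1\<close>.\<close>

lemma generate_order3: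
  assumes x: "x \<in> carrier G0" "fst x \<noteq> 0"
  shows "generate G0 {x} \<subseteq> {\<one>\<^bsub>G0\<^esub>, x, x \<otimes>\<^bsub>G0\<^esub> x}"
proof -
  let ?x2 = "x \<otimes>\<^bsub>G0\<^esub> x"
  have x2: "?x2 \<in> carrier G0" using x(1) by simp
  have c3: "x \<otimes>\<^bsub>G0\<^esub> ?x2 = \<one>\<^bsub>G0\<^esub>" by (rule G0_order3[OF x])
  have c3': "?x2 \<otimes>\<^bsub>G0\<^esub> x = \<one>\<^bsub>G0\<^esub>" using c3 G.m_assoc[OF x(1) x(1) x(1)] by simp
  have c4: "?x2 \<otimes>\<^bsub>G0\<^esub> ?x2 = x" using G.m_assoc[OF x(1) x(1) x2] c3 x(1) by simp
  have inv: "inv\<^bsub>G0\<^esub> x = ?x2" by (rule G.inv_equality[OF c3' x(1) x2])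
  show ?thesis
  proof (rule generate_subset_closed)
    fix h assume "h \<in> {x}"
    then show "h \<in> {\<one>\<^bsub>G0\<^esub>, x, ?x2}" and "inv\<^bsub>G0\<^esub> h \<in> {\<one>\<^bsub>G0\<^esub>, x, ?x2}"
      using inv by auto
  next
    fix a b assume "a \<in> {\<one>\<^bsub>G0\<^esub>, x, ?x2}" "b \<in> {\<one>\<^bsub>G0\<^esub>, x, ?x2}"
    then show "a \<otimes>\<^bsub>G0\<^esub> b \<in> {\<one>\<^bsub>G0\<^esub>, x, ?x2}"
      using x(1) x2 c3 c3' c4 by auto
  qed simp
qed

lemma one_generated_B_part:
  assumes "S \<subseteq> carrier G0" "finite S" "card S \<le> 1"
  obtains y0 where "y0 \<in> Bvec" "\<And>a. a \<in> generate G0 S \<Longrightarrow> fst a = 0 \<Longrightarrow> a \<in> int_multiples y0"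
proof -
  obtain x where x: "x \<in> carrier G0" "S \<subseteq> {x}"
  proof (cases "S = {}")
    case True
    then show ?thesis using that[of "\<one>\<^bsub>G0\<^esub>"] by simp
  next
    case False
    then have "card S \<noteq> 0" using assms(2) by simp
    then have "card S = 1" using assms(3) by linarith
    then obtain x where "S = {x}" by (auto simp: card_1_singleton_iff)
    then show ?thesis using that assms(1) by simp
  qed
  have gen: "generate G0 S \<subseteq> generate G0 {x}" using x by (intro G.mono_generate) simp
  show ?thesis
  proof (cases "fst x = 0")
    case True
    then obtain y0 where "x = (0, y0)" "y0 \<in> Bvec" using x(1) by (cases x) (auto simp: G0_carrier)
    then show ?thesis using that[of y0] gen generate_B_element by blast
  next
    case False
    obtain k p where xk: "x = (k, p)" "k < 3" "p \<in> Bvec" "k \<noteq> 0"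
      using x(1) False by (cases x) (auto simp: G0_carrier)
    then have "k = 1 \<or> k = 2" by auto
    then have "fst (x \<otimes>\<^bsub>G0\<^esub> x) \<noteq> 0" using xk by (auto simp: G0_mult)
    then have "a = \<one>\<^bsub>G0\<^esub>" if "a \<in> generate G0 S" "fst a = 0" for a
    proof -
      have "a \<in> {\<one>\<^bsub>G0\<^esub>, x, x \<otimes>\<^bsub>G0\<^esub> x}" using that(1) gen generate_order3[OF x(1) False] by blast
      then show ?thesis using False \<open>fst (x \<otimes>\<^bsub>G0\<^esub> x) \<noteq> 0\<close> that(2) by blast
    qed
    moreover have "\<one>\<^bsub>G0\<^esub> \<in> int_multiples vzero" by (auto simp: int_multiples_def G0_one smul_vzero)
    ultimately show ?thesis using that[OF vzero_Bvec] by metis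
  qed
qed

lemma level_coords:
  assumes "emb z = vadd (smul (of_int k) y) (smul r \<nu>)" "\<nu> \<in> NB K"
  shows "re z mod 3 ^ K = (k * fst y K) mod 3 ^ K \<and> im z mod 3 ^ K = (k * snd y K) mod 3 ^ K"
proof -
  have "fst (emb z) K = fst (vadd (smul (of_int k) y) (smul r \<nu>)) K"
    "snd (emb z) K = snd (vadd (smul (of_int k) y) (smul r \<nu>)) K" using assms(1) by simp_all
  moreover have "fst \<nu> K = 0" "snd \<nu> K = 0" using assms(2) by (simp_all add: NB_def)
  ultimately show ?thesis by (simp add: coord_simps mod_add_left_eq)
qed

text \<open>No pair of integer multiples \<open>k Y, l Y\<close> of a vector \<open>Y \<in> \<int>\<^sup>2\<close> is congruent to
  \<open>(3\<^sup>N, 0)\<close> and \<open>(0, 3\<^sup>N)\<close> modulo \<open>M = 3\<^sup>2\<^sup>N\<^sup>+\<^sup>1\<close>: the determinant \<open>3\<^sup>2\<^sup>N\<close> of these two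
  vectors would vanish modulo \<open>M\<close>.\<close>

lemma no_cyclic_approximation:
  fixes k l Y1 Y2 :: int
  assumes "(3::int) ^ N mod 3 ^ (2 * N + 1) = (k * Y1) mod 3 ^ (2 * N + 1)"
    "(3::int) ^ N mod 3 ^ (2 * N + 1) = (l * Y2) mod 3 ^ (2 * N + 1)"
    "0 = (k * Y2) mod 3 ^ (2 * N + 1)" "0 = (l * Y1) mod 3 ^ (2 * N + 1)"
  shows False
proof -
  define M :: int where "M = 3 ^ (2 * N + 1)"
  define A where "A = 3 ^ N - k * Y1"
  define D where "D = 3 ^ N - l * Y2"
  have "M dvd A" using assms(1) unfolding A_def M_def by (simp add: mod_eq_dvd_iff)
  moreover have "M dvd D" using assms(2) unfolding D_def M_def by (simp add: mod_eq_dvd_iff)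
  moreover have "M dvd k * Y2" using assms(3) unfolding M_def by (simp add: dvd_eq_mod_eq_0)
  ultimately have "M dvd (k * Y1) * D + A * (l * Y2) + A * D + (k * Y2) * (l * Y1)" by simp
  moreover have "(k * Y1) * D + A * (l * Y2) + A * D + (k * Y2) * (l * Y1) = 3 ^ N * 3 ^ N"
    unfolding A_def D_def by (simp add: algebra_simps)
  ultimately have "M dvd 3 ^ (2 * N)" by (simp add: power_add[symmetric] mult_2)
  then have "M \<le> 3 ^ (2 * N)" by (simp add: zdvd_imp_le)
  moreover have "(3::int) ^ (2 * N) < M" unfolding M_def by simp
  ultimately show False by simp
qed

lemma closure_approx_multiple:
  assumes A: "A \<subseteq> carrier G0" "\<And>a. a \<in> A \<Longrightarrow> fst a = 0 \<Longrightarrow> a \<in> int_multiples y0"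
    and z: "(0, emb z) \<in> g0_closure A"
  shows "\<exists>k::int. re z mod 3 ^ K = (k * fst y0 K) mod 3 ^ K \<and> im z mod 3 ^ K = (k * snd y0 K) mod 3 ^ K"
proof -
  obtain a n where an: "a \<in> A" "n \<in> Nbh K" "(0, emb z) = a \<otimes>\<^bsub>G0\<^esub> n"
    using z closure_sub[of A K] unfolding set_mult_def by blast
  obtain \<nu> where n: "n = (0, \<nu>)" "\<nu> \<in> NB K" using an(2) by (cases n) (auto simp: Nbh_iff)
  obtain ka pa where a: "a = (ka, pa)" "ka < 3" using an(1) A(1) by (cases a) (auto simp: G0_carrier)
  have e: "(0, emb z) = (ka, vadd pa (smul (omega ^ ka) \<nu>))"
    using an(3) a n NB_Bvec by (simp add: G0_mult)
  then have "ka = 0" using a(2) by simp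
  then have "(ka, pa) \<in> int_multiples y0" using A(2) an(1) a(1) by simp
  then obtain k where "pa = smul (of_int k) y0" by (auto simp: int_multiples_def)
  then have "emb z = vadd (smul (of_int k) y0) (smul 1 \<nu>)" using e \<open>ka = 0\<close> by simp
  then show ?thesis using level_coords n(2) by blast
qed

text \<open>An open subgroup containing \<open>3\<^sup>N B\<close> is not topologically generated by fewer than two
  elements: otherwise \<open>3\<^sup>N\<close> and \<open>3\<^sup>N \<omega>\<close> would both be congruent to multiples of a
  single vector \<open>y\<^sub>0\<close> modulo \<open>3\<^sup>2\<^sup>N\<^sup>+\<^sup>1\<close>.\<close>

lemma lower_bound:
  assumes H: "subgroup H G0" "Nbh N \<subseteq> H" and S: "finite S" "top_generates H S"
  shows "2 \<le> card S"
proof (rule ccontr)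
  assume "\<not> 2 \<le> card S"
  have cl: "g0_closure (generate G0 S) = H" and "S \<subseteq> H" using S(2) by (auto simp: top_generates_def)
  then have Sc: "S \<subseteq> carrier G0" using subgroup.subset[OF H(1)] by blast
  have "card S \<le> 1" using \<open>\<not> 2 \<le> card S\<close> by simp
  then obtain y0 where y0: "\<And>a. a \<in> generate G0 S \<Longrightarrow> fst a = 0 \<Longrightarrow> a \<in> int_multiples y0"
    using one_generated_B_part[OF Sc S(1)] by blast
  define K where "K = 2 * N + 1"
  have approx: "\<exists>k::int. re z mod 3 ^ K = (k * fst y0 K) mod 3 ^ K \<and> im z mod 3 ^ K = (k * snd y0 K) mod 3 ^ K"
    if "(0, emb z) \<in> Nbh N" for z
    using closure_approx_multiple[OF G.generate_incl[OF Sc] y0] that H(2) cl by blast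
  have "(0, emb (3 ^ N)) \<in> Nbh N" by (simp add: Nbh_iff emb_NB)
  from approx[OF this] obtain k where
    "3 ^ N mod 3 ^ K = (k * fst y0 K) mod 3 ^ K" "0 = (k * snd y0 K) mod 3 ^ K" by auto
  moreover have "(0, emb (Eis 0 (3 ^ N))) \<in> Nbh N" by (simp add: Nbh_iff emb_NB)
  from approx[OF this] obtain l where
    "3 ^ N mod 3 ^ K = (l * snd y0 K) mod 3 ^ K" "0 = (l * fst y0 K) mod 3 ^ K" by auto
  ultimately show False using no_cyclic_approximation[of N k "fst y0 K" l "snd y0 K"] unfolding K_def by simp
qed

lemma dgen_eq_2:
  assumes "subgroup H G0" "Nbh N \<subseteq> H" "finite S" "card S \<le> 2" "top_generates H S"
  shows "dgen H = 2"
  unfolding dgen_def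
proof (rule Least_equality)
  have "card S = 2" using lower_bound[OF assms(1,2,3,5)] assms(4) by simp
  then show "\<exists>S. finite S \<and> card S = 2 \<and> top_generates H S" using assms(3,5) by blast
next
  fix n assume "\<exists>S. finite S \<and> card S = n \<and> top_generates H S"
  then show "2 \<le> n" using lower_bound[OF assms(1,2)] by blast
qed

section \<open>Open subgroups inside \<open>B\<close>\<close>

lemma int_subgroup_cyclic:
  fixes S :: "int set"
  assumes "0 \<in> S" "\<And>x y. x \<in> S \<Longrightarrow> y \<in> S \<Longrightarrow> x - y \<in> S" "c \<in> S" "c \<noteq> 0"
  shows "\<exists>g\<in>S. \<forall>x\<in>S. g dvd x"
proof -
  have mult: "c * x \<in> S" if "x \<in> S" for c x using of_int_mult_closed[OF assms(1,2) that] by simp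
  have "\<exists>n. int n \<in> S \<and> 0 < n"
    using assms(3,4) mult[of c "-1"] by (intro exI[of _ "nat \<bar>c\<bar>"]) (auto simp: abs_if)
  define g where "g = (LEAST n::nat. int n \<in> S \<and> 0 < n)"
  have g: "int g \<in> S" "0 < g" using LeastI_ex[OF \<open>\<exists>n. int n \<in> S \<and> 0 < n\<close>] unfolding g_def by auto
  have "int g dvd x" if "x \<in> S" for x
  proof -
    have "x mod int g = x - (x div int g) * int g" by (simp add: minus_div_mult_eq_mod)
    then have ms: "x mod int g \<in> S" using assms(2)[OF that mult[OF g(1)]] by simp
    have "x mod int g = 0"
    proof (rule ccontr)
      assume "x mod int g \<noteq> 0"
      then have r: "0 < x mod int g" using g(2) by (simp add: order_neq_le_trans pos_mod_sign)
      then have "int (nat (x mod int g)) \<in> S \<and> 0 < nat (x mod int g)" using ms by simp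
      then have "g \<le> nat (x mod int g)" unfolding g_def by (rule Least_le)
      moreover have "x mod int g < int g" using g(2) by simp
      ultimately show False using r by linarith
    qed
    then show ?thesis by (simp add: dvd_eq_mod_eq_0)
  qed
  then show ?thesis using g(1) by blast
qed

text \<open>A subgroup of \<open>\<int>[\<omega>] = \<int>\<^sup>2\<close> containing \<open>3\<^sup>N\<close> and \<open>3\<^sup>N \<omega>\<close> has a basis in Hermite
  normal form: it is generated by \<open>(g\<^sub>1, 0)\<close> and some \<open>(c, g\<^sub>2)\<close>.\<close>

lemma lattice_two_generators:
  fixes L :: "eis set"
  assumes "0 \<in> L" "\<And>x y. x \<in> L \<Longrightarrow> y \<in> L \<Longrightarrow> x - y \<in> L" "Eis (3 ^ N) 0 \<in> L" "Eis 0 (3 ^ N) \<in> L"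
  shows "\<exists>u\<in>L. \<exists>v\<in>L. \<forall>z\<in>L. \<exists>a b. z = of_int a * u + of_int b * v"
proof -
  have "\<exists>g\<in>{a. Eis a 0 \<in> L}. \<forall>x\<in>{a. Eis a 0 \<in> L}. g dvd x"
  proof (rule int_subgroup_cyclic)
    show "0 \<in> {a. Eis a 0 \<in> L}" using assms(1) by (simp add: zero_eis_def)
    show "x - y \<in> {a. Eis a 0 \<in> L}" if "x \<in> {a. Eis a 0 \<in> L}" "y \<in> {a. Eis a 0 \<in> L}" for x y
      using assms(2)[of "Eis x 0" "Eis y 0"] that by (simp add: minus_eis_def)
    show "3 ^ N \<in> {a. Eis a 0 \<in> L}" using assms(3) by simp
  qed simp
  then obtain g1 where g1: "Eis g1 0 \<in> L" "\<And>a. Eis a 0 \<in> L \<Longrightarrow> g1 dvd a" by blast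
  have "\<exists>g\<in>{b. \<exists>a. Eis a b \<in> L}. \<forall>x\<in>{b. \<exists>a. Eis a b \<in> L}. g dvd x"
  proof (rule int_subgroup_cyclic)
    show "0 \<in> {b. \<exists>a. Eis a b \<in> L}" using assms(1) by (auto simp: zero_eis_def)
    show "x - y \<in> {b. \<exists>a. Eis a b \<in> L}"
      if xy: "x \<in> {b. \<exists>a. Eis a b \<in> L}" "y \<in> {b. \<exists>a. Eis a b \<in> L}" for x y
    proof -
      obtain a b where "Eis a x \<in> L" "Eis b y \<in> L" using xy by blast
      then have "Eis (a - b) (x - y) \<in> L" using assms(2) by (fastforce simp: minus_eis_def)
      then show ?thesis by blast
    qed
    show "3 ^ N \<in> {b. \<exists>a. Eis a b \<in> L}" using assms(4) by blast
  qed simp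
  then obtain g2 c where g2: "Eis c g2 \<in> L" "\<And>a b. Eis a b \<in> L \<Longrightarrow> g2 dvd b" by blast
  have "\<exists>a b. z = of_int a * Eis g1 0 + of_int b * Eis c g2" if z: "z \<in> L" for z
  proof -
    have "g2 dvd im z" using g2(2)[of "re z" "im z"] z by simp
    then obtain beta where beta: "im z = beta * g2" by (metis dvdE mult.commute)
    have "z - of_int beta * Eis c g2 \<in> L"
      using assms(2)[OF z] of_int_mult_closed[OF assms(1,2) g2(1)] by blast
    moreover have "z - of_int beta * Eis c g2 = Eis (re z - beta * c) 0" using beta by (simp add: eis_eq_iff)
    ultimately have "g1 dvd (re z - beta * c)" using g1(2) by simp
    then obtain alpha where alpha: "re z - beta * c = alpha * g1" by (metis dvdE mult.commute)
    have "z = of_int alpha * Eis g1 0 + of_int beta * Eis c g2"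
      using alpha beta by (simp add: eis_eq_iff algebra_simps)
    then show ?thesis by blast
  qed
  then show ?thesis using g1(1) g2(1) by blast
qed

lemma int_points_comb:
  assumes "subgroup T G0" "(0, emb u) \<in> T" "(0, emb v) \<in> T"
  shows "(0, emb (of_int a * u + of_int b * v)) \<in> T"
proof -
  note s = int_points_subgroup[OF assms(1)]
  have "of_int a * u \<in> {z. (0, emb z) \<in> T}" "of_int b * v \<in> {z. (0, emb z) \<in> T}"
    using of_int_mult_closed[OF s] assms(2,3) by blast+
  then have "(0, emb (of_int a * u)) \<otimes>\<^bsub>G0\<^esub> (0, emb (of_int b * v)) \<in> T"
    using subgroup.m_closed[OF assms(1)] by simp
  then show ?thesis by (simp add: emb_mult)
qed

lemma generate_subgroup: "subgroup H G0 \<Longrightarrow> S \<subseteq> H \<Longrightarrow> subgroup (generate G0 S) G0"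
  by (rule G.generate_is_subgroup) (use subgroup.subset in blast)

text \<open>To show that \<open>S\<close> topologically generates an open subgroup \<open>H \<supseteq> S\<close>, it suffices to show
  that \<open>H\<close> lies in the closure of \<open>\<langle>S\<rangle>\<close>, as \<open>H\<close> is closed.\<close>

lemma top_generatesI:
  assumes "subgroup H G0" "Nbh N \<subseteq> H" "S \<subseteq> H" "H \<subseteq> g0_closure (generate G0 S)"
  shows "top_generates H S"
  using assms closure_in_open[OF assms(1,2)] G.generate_subgroup_incl[OF assms(3,1)]
  unfolding top_generates_def by blast

lemma int_points_dense_in_B:
  assumes H: "subgroup H G0" "Nbh N \<subseteq> H" "H \<subseteq> B"
    and T: "\<And>z. (0, emb z) \<in> H \<Longrightarrow> (0, emb z) \<in> T"
  shows "H \<subseteq> g0_closure T"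
proof
  fix h assume h: "h \<in> H"
  then obtain p where hp: "h = (0, p)" "p \<in> Bvec" using H(3) by (cases h) (auto simp: B_iff)
  show "h \<in> g0_closure T"
  proof (rule closureI[of N])
    fix K assume K: "N \<le> K"
    have "Nbh K \<subseteq> H" using Nbh_anti[OF K] H(2) by blast
    then have "(0, emb (trunc K p)) \<in> H"
      using approx_in[OF H(1), of K 0 p] h hp trunc_close_sym[OF hp(2)] by simp
    then show "h \<in> T <#>\<^bsub>G0\<^esub> Nbh K"
      using right_approx[of 0 p "emb (trunc K p)" K T] hp trunc_close[OF hp(2)] T by simp
  qed
qed

text \<open>An open subgroup contained in \<open>B\<close> is topologically generated by two integral points,
  namely a basis of its lattice of integral points.\<close>

lemma open_subgroup_in_B:
  assumes H: "subgroup H G0" "Nbh N \<subseteq> H" "H \<subseteq> B"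
  shows "\<exists>S. finite S \<and> card S \<le> 2 \<and> top_generates H S"
proof -
  define L where "L = {z. (0, emb z) \<in> H}"
  have "(0, emb (Eis (3 ^ N) 0)) \<in> Nbh N" "(0, emb (Eis 0 (3 ^ N))) \<in> Nbh N"
    by (simp_all add: Nbh_iff emb_NB)
  then have "Eis (3 ^ N) 0 \<in> L" "Eis 0 (3 ^ N) \<in> L" using H(2) unfolding L_def by auto
  then obtain u v where uv: "u \<in> L" "v \<in> L" "\<And>z. z \<in> L \<Longrightarrow> \<exists>a b. z = of_int a * u + of_int b * v"
    using lattice_two_generators[of L N] int_points_subgroup[OF H(1)] unfolding L_def by blast
  define S where "S = {(0::nat, emb u), (0, emb v)}"
  have SH: "S \<subseteq> H" using uv unfolding S_def L_def by auto
  have "(0, emb u) \<in> generate G0 S" "(0, emb v) \<in> generate G0 S"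
    unfolding S_def by (auto intro: generate.incl)
  then have "(0, emb z) \<in> generate G0 S" if "(0, emb z) \<in> H" for z
    using uv(3)[of z] that int_points_comb[OF generate_subgroup[OF H(1) SH]] unfolding L_def by auto
  then have "top_generates H S"
    using top_generatesI[OF H(1,2) SH] int_points_dense_in_B[OF H] by blast
  moreover have "finite S" "card S \<le> 2" unfolding S_def by (auto simp: card_insert_if)
  ultimately show ?thesis by blast
qed

section \<open>Open subgroups not inside \<open>B\<close>\<close>

text \<open>Conjugating \<open>(0, z)\<close> by \<open>(1, v\<^sub>0)\<close> gives \<open>(0, \<omega> z)\<close>; so the integral points of a subgroup
  containing \<open>(1, v\<^sub>0)\<close> are stable under multiplication by \<open>\<omega>\<close>.\<close>

lemma conj_rotation:
  assumes T: "subgroup T G0" "(1, emb v0) \<in> T" "(0, emb z) \<in> T"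
  shows "(0, emb (omega * z)) \<in> T"
proof -
  have c: "(1::nat, emb v0) \<in> carrier G0" "(0::nat, emb z) \<in> carrier G0"
    "(0::nat, emb (omega * z)) \<in> carrier G0"
    by (simp_all add: G0_carrier)
  have "(0, emb (omega * z)) \<otimes>\<^bsub>G0\<^esub> (1, emb v0) = (1, emb v0) \<otimes>\<^bsub>G0\<^esub> (0, emb z)"
    by (simp add: G0_mult smul_one smul_emb emb_add[symmetric] add.commute)
  then have "(0, emb (omega * z)) = ((1, emb v0) \<otimes>\<^bsub>G0\<^esub> (0, emb z)) \<otimes>\<^bsub>G0\<^esub> inv\<^bsub>G0\<^esub> (1, emb v0)"
    using G.inv_solve_right[OF c(3) _ c(1)] c by simp
  then show ?thesis using T subgroup.m_closed[OF T(1)] subgroup.m_inv_closed[OF T(1)] by metis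
qed

text \<open>The powers \<open>(1, v\<^sub>0)\<^sup>k = (k, c\<^sub>k)\<close> with \<open>c\<^sub>0 = 0\<close>, \<open>c\<^sub>1 = v\<^sub>0\<close>, \<open>c\<^sub>2 = v\<^sub>0 + \<omega> v\<^sub>0\<close>; the
  cocycle identity \<open>c\<^sub>k\<^sub>+\<^sub>l = c\<^sub>k + \<omega>\<^sup>k c\<^sub>l\<close> holds since \<open>1 + \<omega> + \<omega>\<^sup>2 = 0\<close>.\<close>

definition cocycle :: "eis \<Rightarrow> nat \<Rightarrow> eis" where
  "cocycle v k = (if k = 0 then 0 else if k = 1 then v else v + omega * v)"

lemma cocycle_add:
  assumes "k < 3" "l < 3"
  shows "cocycle v ((k + l) mod 3) = cocycle v k + omega ^ k * cocycle v l"
proof -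
  have "k = 0 \<or> k = 1 \<or> k = 2" "l = 0 \<or> l = 1 \<or> l = 2" using assms by auto
  then show ?thesis
    by (elim disjE) (simp_all add: cocycle_def eis_eq_iff omega_def power2_eq_square algebra_simps)
qed

lemma cocycle_in:
  assumes T: "subgroup T G0" "(1, emb v0) \<in> T" and "k < 3"
  shows "(k, emb (cocycle v0 k)) \<in> T"
proof -
  have "(1, emb v0) \<otimes>\<^bsub>G0\<^esub> (1, emb v0) = (2, emb (cocycle v0 2))"
    by (simp add: G0_mult cocycle_def smul_emb emb_add)
  then have "(2, emb (cocycle v0 2)) \<in> T" using subgroup.m_closed[OF T(1) T(2) T(2)] by simp
  moreover have "(0, emb (cocycle v0 0)) \<in> T"
    using subgroup.one_closed[OF T(1)] by (simp add: cocycle_def G0_one emb_zero)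
  moreover have "k = 0 \<or> k = 1 \<or> k = 2" using assms(3) by auto
  ultimately show ?thesis using T(2) by (auto simp: cocycle_def)
qed

definition phi :: "eis \<Rightarrow> eis \<Rightarrow> g0elt \<Rightarrow> g0elt" where
  "phi gam v x = (fst x, vadd (smul gam (snd x)) (emb (cocycle v (fst x))))"

lemma phi_mult:
  assumes "k < 3" "l < 3" "p \<in> Bvec" "q \<in> Bvec"
  shows "phi gam v ((k, p) \<otimes>\<^bsub>G0\<^esub> (l, q)) = phi gam v (k, p) \<otimes>\<^bsub>G0\<^esub> phi gam v (l, q)"
  using assms by (simp add: phi_def G0_mult smul_vadd smul_smul cocycle_add smul_emb emb_add vadd_swap mult_ac)

lemma phi_B: "p \<in> Bvec \<Longrightarrow> phi gam v (0, p) = (0, smul gam p)"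
  by (simp add: phi_def cocycle_def emb_zero vadd_zero_right)

text \<open>The situation of an open subgroup \<open>H \<supseteq> 3\<^sup>N B\<close> containing \<open>(1, v\<^sub>0)\<close>, whose integral
  points are \<open>\<lambda>\<^sup>m \<int>[\<omega>]\<close>. Then \<open>\<phi>\<close> with \<open>\<gamma> = \<lambda>\<^sup>m\<close> maps \<open>G\<^sub>0\<close> isomorphically onto \<open>H\<close>.\<close>

locale lam_power_subgroup =
  fixes H N v0 m
  assumes sg: "subgroup H G0" and NH: "Nbh N \<subseteq> H" and gH: "(1, emb v0) \<in> H"
    and int_points: "\<And>z. (0, emb z) \<in> H \<longleftrightarrow> (\<exists>r. z = lam ^ m * r)"
begin

abbreviation "gam \<equiv> lam ^ m"
abbreviation "ph \<equiv> phi gam v0"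

lemma H_carrier: "H \<subseteq> carrier G0"
  using subgroup.subset[OF sg] .

lemma NH_mono: "N \<le> K \<Longrightarrow> Nbh K \<subseteq> H"
  using Nbh_anti NH by blast

text \<open>\<open>\<lambda>\<^sup>m B \<subseteq> H\<close>, approximating \<open>\<lambda>\<^sup>m p\<close> by the integral point \<open>\<lambda>\<^sup>m trunc N p\<close>.\<close>

lemma smul_in_H:
  assumes "p \<in> Bvec"
  shows "(0, smul gam p) \<in> H"
proof -
  have "(0, emb (gam * trunc N p)) \<in> H" using int_points by blast
  moreover have "vadd (vneg (emb (gam * trunc N p))) (smul gam p) \<in> NB N"
    using NB_smul[OF trunc_close[OF assms], of gam N] by (simp add: smul_vadd smul_vneg smul_emb)
  ultimately show ?thesis using approx_in[OF sg NH, of 0 "emb (gam * trunc N p)" "smul gam p"] assms by simp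
qed

lemma phi_in_H: "x \<in> carrier G0 \<Longrightarrow> ph x \<in> H"
proof -
  assume "x \<in> carrier G0"
  then obtain k p where x: "x = (k, p)" "k < 3" "p \<in> Bvec" by (cases x) (auto simp: G0_carrier)
  have "(0, smul gam p) \<otimes>\<^bsub>G0\<^esub> (k, emb (cocycle v0 k)) = ph x" using x by (simp add: B_mult phi_def)
  then show ?thesis using subgroup.m_closed[OF sg smul_in_H[OF x(3)] cocycle_in[OF sg gH x(2)]] by simp
qed

text \<open>\<open>H \<inter> B \<subseteq> \<lambda>\<^sup>m B\<close>: the truncation of \<open>q\<close> modulo \<open>3\<^sup>N\<^sup>+\<^sup>m\<close> is an integral point of \<open>H\<close>,
  hence of the form \<open>\<lambda>\<^sup>m r\<close>, and the remainder is \<open>3\<^sup>m y'\<close>, which is divisible by \<open>\<lambda>\<^sup>m\<close>.\<close>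

lemma B_part_div_lam:
  assumes "(0, q) \<in> H" "q \<in> Bvec"
  shows "\<exists>y\<in>Bvec. q = smul gam y"
proof -
  define t where "t = trunc (N + m) q"
  have "(0, emb t) \<in> H"
    using approx_in[OF sg NH_mono[of "N + m"] assms(1), of "emb t"] trunc_close_sym[OF assms(2)]
    unfolding t_def by simp
  then obtain r where r: "t = gam * r" using int_points by blast
  have "vadd (vneg (emb t)) q \<in> NB m"
    using trunc_close[OF assms(2), of "N + m"] NB_anti[of m "N + m"] unfolding t_def by auto
  then obtain y' where y': "y' \<in> Bvec" "vadd (vneg (emb t)) q = smul (3 ^ m) y'" using NB_div by blast
  have "q = vadd (emb t) (vadd (vneg (emb t)) q)" using trunc_decomp[OF assms(2), of "N + m"] unfolding t_def by simp
  also have "\<dots> = smul gam (vadd (emb r) (smul (conj gam) y'))"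
    using y'(2) by (simp add: r smul_vadd smul_emb smul_smul lam_pow_conj)
  finally show ?thesis using y'(1) by (intro bexI[of _ "vadd (emb r) (smul (conj gam) y')"]) auto
qed

text \<open>Surjectivity: for \<open>(k, p) \<in> H\<close>, \<open>p - c\<^sub>k\<close> lies in \<open>H \<inter> B \<subseteq> \<lambda>\<^sup>m B\<close>.\<close>

lemma phi_surj:
  assumes "(k, p) \<in> H"
  shows "\<exists>y \<in> Bvec. (k, p) = ph (k, y)"
proof -
  have kp: "k < 3" "p \<in> Bvec" using assms H_carrier by (auto simp: G0_carrier)
  define c where "c = emb (cocycle v0 k)"
  have cH: "(k, c) \<in> H" unfolding c_def using cocycle_in[OF sg gH kp(1)] .
  define q where "q = vadd p (vneg c)"
  have q: "q \<in> Bvec" unfolding q_def c_def using kp by simp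
  have "(0, q) \<otimes>\<^bsub>G0\<^esub> (k, c) = (k, p)" using kp by (simp add: B_mult q_def c_def vadd_vneg_cancel)
  then have "(0, q) = (k, p) \<otimes>\<^bsub>G0\<^esub> inv\<^bsub>G0\<^esub> (k, c)"
    using G.inv_solve_right[of "(0, q)" "(k, p)" "(k, c)"] kp q by (simp add: G0_carrier c_def)
  then have "(0, q) \<in> H" using subgroup.m_closed[OF sg assms subgroup.m_inv_closed[OF sg cH]] by simp
  then obtain y where y: "y \<in> Bvec" "q = smul gam y" using B_part_div_lam q by blast
  have "ph (k, y) = (k, vadd q c)" using y(2) by (simp add: phi_def c_def)
  also have "vadd q c = p" unfolding q_def using kp vadd_vneg_cancel by simp
  finally have "(k, p) = ph (k, y)" by simp
  then show ?thesis using y(1) by blast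
qed

text \<open>Injectivity: \<open>\<lambda>\<^sup>m\<close> is not a zero divisor on \<open>B\<close>.\<close>

lemma phi_inj: "inj_on ph (carrier G0)"
proof (rule inj_onI)
  fix x y assume x: "x \<in> carrier G0" and y: "y \<in> carrier G0" and e: "ph x = ph y"
  obtain k p where xk: "x = (k, p)" "p \<in> Bvec" using x by (cases x) (auto simp: G0_carrier)
  obtain l q where yl: "y = (l, q)" "q \<in> Bvec" using y by (cases y) (auto simp: G0_carrier)
  have kl: "k = l" using e xk yl by (simp add: phi_def)
  have "vadd (smul gam p) (emb (cocycle v0 k)) = vadd (smul gam q) (emb (cocycle v0 k))"
    using e xk yl kl by (simp add: phi_def)
  then have "smul gam p = smul gam q" using xk yl by (metis vadd_cancel_right smul_Bvec)
  then have "smul gam (vadd (vneg p) q) = vzero" by (simp add: smul_vadd smul_vneg vadd_vneg)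
  then have "vadd (vneg p) q \<in> NB n" for n using NB_lam_cancel[of _ m n] NB_vzero xk(2) yl(2) by simp
  then have "vadd (vneg p) q = vzero" using NB_all xk(2) yl(2) by simp
  then have "q = p" using vadd_vneg_left[OF yl(2), of p] xk(2) by (simp add: vadd_zero_right)
  then show "x = y" using xk yl kl by simp
qed

lemma phi_image: "ph ` carrier G0 = H"
proof
  show "ph ` carrier G0 \<subseteq> H" using phi_in_H by blast
next
  show "H \<subseteq> ph ` carrier G0"
  proof
    fix h assume h: "h \<in> H"
    then obtain k p where hp: "h = (k, p)" "k < 3" using H_carrier by (cases h) (auto simp: G0_carrier)
    obtain y where "y \<in> Bvec" "(k, p) = ph (k, y)" using phi_surj h hp(1) by blast
    then show "h \<in> ph ` carrier G0" using hp by (auto simp: G0_carrier)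
  qed
qed

lemma phi_iso: "ph \<in> iso G0 (G0\<lparr>carrier := H\<rparr>)"
proof -
  have "ph \<in> hom G0 (G0\<lparr>carrier := H\<rparr>)"
  proof (rule homI)
    fix x assume "x \<in> carrier G0"
    then show "ph x \<in> carrier (G0\<lparr>carrier := H\<rparr>)" using phi_in_H by simp
  next
    fix x y assume "x \<in> carrier G0" "y \<in> carrier G0"
    then obtain k p l q where "x = (k, p)" "k < 3" "p \<in> Bvec" "y = (l, q)" "l < 3" "q \<in> Bvec"
      by (cases x; cases y) (auto simp: G0_carrier)
    then show "ph (x \<otimes>\<^bsub>G0\<^esub> y) = ph x \<otimes>\<^bsub>G0\<lparr>carrier := H\<rparr>\<^esub> ph y" using phi_mult by simp
  qed
  moreover have "bij_betw ph (carrier G0) (carrier (G0\<lparr>carrier := H\<rparr>))"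
    using phi_inj phi_image by (simp add: bij_betw_def)
  ultimately show ?thesis by (simp add: iso_def)
qed

text \<open>Both \<open>\<phi>\<close> and \<open>\<phi>\<^sup>-\<^sup>1\<close> are continuous: \<open>\<phi>(3\<^sup>n B) \<subseteq> 3\<^sup>n B\<close>, and
  \<open>\<phi>\<^sup>-\<^sup>1(3\<^sup>n\<^sup>+\<^sup>m B \<inter> H) \<subseteq> 3\<^sup>n B\<close> since \<open>\<lambda>\<^sup>m\<close> can be cancelled.\<close>

lemma phi_Nbh: "x \<in> Nbh n \<Longrightarrow> ph x \<in> Nbh n"
  by (cases x) (auto simp: Nbh_iff phi_B NB_Bvec NB_smul)

lemma phi_preimage_Nbh:
  assumes "z \<in> carrier G0" "ph z \<in> Nbh (n + m)"
  shows "z \<in> Nbh n"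
proof -
  obtain k y where zk: "z = (k, y)" "y \<in> Bvec" using assms(1) by (cases z) (auto simp: G0_carrier)
  then have "k = 0" using assms(2) by (simp add: Nbh_iff phi_def)
  then have "smul gam y \<in> NB (n + m)" using assms(2) zk by (simp add: Nbh_iff phi_B)
  then show ?thesis using zk \<open>k = 0\<close> NB_lam_cancel[OF zk(2), of m n] by (simp add: Nbh_iff add.commute)
qed

lemma top_iso: "top_iso_G0 H"
proof -
  define f where "f = inv_into (carrier G0) ph"
  have fiso: "f \<in> iso (G0\<lparr>carrier := H\<rparr>) G0" unfolding f_def by (rule G.iso_set_sym[OF phi_iso])
  have f: "f x \<in> carrier G0" "ph (f x) = x" if "x \<in> H" for x
    using that phi_image inv_into_into[of x ph "carrier G0"] f_inv_into_f[of x ph "carrier G0"]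
    unfolding f_def by auto
  have "f ` (H \<inter> Nbh (n + m)) \<subseteq> Nbh n" for n
  proof
    fix z assume "z \<in> f ` (H \<inter> Nbh (n + m))"
    then obtain x where "x \<in> H" "x \<in> Nbh (n + m)" "z = f x" by blast
    then show "z \<in> Nbh n" using f phi_preimage_Nbh by metis
  qed
  then have c1: "cont_hom H f" unfolding cont_hom_def by blast
  have "inv_into H f x = ph x" if "x \<in> carrier G0" for x
  proof (rule inv_into_f_eq)
    show "inj_on f H" using fiso by (simp add: iso_def bij_betw_def)
    show "ph x \<in> H" using phi_in_H[OF that] .
    show "f (ph x) = x" unfolding f_def by (rule inv_into_f_f[OF phi_inj that])
  qed
  then have "inv_into H f ` (carrier G0 \<inter> Nbh n) \<subseteq> Nbh n" for n using phi_Nbh by auto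
  then have c2: "cont_hom (carrier G0) (inv_into H f)" unfolding cont_hom_def by blast
  show ?thesis unfolding top_iso_G0_def using fiso c1 c2 by blast
qed

definition gens :: "g0elt set" where
  "gens = {(1, emb v0), (0, emb gam)}"

lemma gens_in_H: "gens \<subseteq> H"
  using gH int_points[of gam] unfolding gens_def by (auto intro: exI[of _ 1])

lemma generate_gens_subgroup: "subgroup (generate G0 gens) G0"
  by (rule generate_subgroup[OF sg gens_in_H])

text \<open>The integral points of the generated group form an ideal containing \<open>\<lambda>\<^sup>m\<close>, so every
  \<open>\<phi>(k, t)\<close> with \<open>t\<close> integral is generated.\<close>

lemma phi_integral_generated:
  assumes "k < 3"
  shows "(k, emb (t * gam + cocycle v0 k)) \<in> generate G0 gens"
proof -
  note gsub = generate_gens_subgroup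
  have gg: "(1, emb v0) \<in> generate G0 gens" "(0, emb gam) \<in> generate G0 gens"
    unfolding gens_def by (auto intro: generate.incl)
  have "eis_ideal {z. (0, emb z) \<in> generate G0 gens}"
    by (rule eis_idealI[OF int_points_subgroup[OF gsub]]) (use conj_rotation[OF gsub gg(1)] in auto)
  then have "(0, emb (t * gam)) \<in> generate G0 gens"
    using gg(2) unfolding eis_ideal_def by blast
  moreover have "(0, emb (t * gam)) \<otimes>\<^bsub>G0\<^esub> (k, emb (cocycle v0 k)) = (k, emb (t * gam + cocycle v0 k))"
    using assms by (simp add: B_mult emb_add)
  ultimately show ?thesis
    using subgroup.m_closed[OF gsub _ cocycle_in[OF gsub gg(1) assms]] by metis
qed

text \<open>These images are dense in \<open>H\<close>: approximate \<open>(k, p) = \<phi>(k, y)\<close> by \<open>\<phi>(k, trunc K y)\<close>.\<close>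

lemma H_in_closure_gens: "H \<subseteq> g0_closure (generate G0 gens)"
proof
  fix h assume h: "h \<in> H"
  then obtain k p where hp: "h = (k, p)" "k < 3" "p \<in> Bvec" using H_carrier by (cases h) (auto simp: G0_carrier)
  obtain y where y: "y \<in> Bvec" "(k, p) = ph (k, y)" using phi_surj h hp(1) by blast
  then have pe: "p = vadd (smul gam y) (emb (cocycle v0 k))" by (simp add: phi_def)
  show "h \<in> g0_closure (generate G0 gens)"
  proof (rule closureI[of N])
    fix K
    define a where "a = emb (trunc K y * gam + cocycle v0 k)"
    have "vadd (vneg a) p = smul gam (vadd (vneg (emb (trunc K y))) y)"
      unfolding a_def pe emb_add by (simp add: vadd_cancel mult.commute smul_vadd smul_vneg smul_emb)
    then have "vadd (vneg a) p \<in> NB K" using NB_smul[OF trunc_close[OF y(1)], of gam K] by simp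
    then show "h \<in> generate G0 gens <#>\<^bsub>G0\<^esub> Nbh K"
      using right_approx[of k p a K "generate G0 gens"] hp phi_integral_generated[OF hp(2)]
      unfolding a_def by simp
  qed
qed

lemma two_generated: "\<exists>S. finite S \<and> card S \<le> 2 \<and> top_generates H S"
proof -
  have "top_generates H gens" by (rule top_generatesI[OF sg NH gens_in_H H_in_closure_gens])
  moreover have "finite gens" "card gens \<le> 2" unfolding gens_def by (auto simp: card_insert_if)
  ultimately show ?thesis by blast
qed

end

text \<open>An open subgroup \<open>H \<nsubseteq> B\<close> contains an element \<open>(1, p\<^sub>1)\<close> (an element of \<open>H \<setminus> B\<close>
  or its square), hence also the nearby integral element \<open>(1, trunc N p\<^sub>1)\<close>.\<close>

lemma integral_rotation_in:
  assumes H: "subgroup H G0" "Nbh N \<subseteq> H" "\<not> H \<subseteq> B"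
  shows "\<exists>v0. (1, emb v0) \<in> H"
proof -
  obtain h0 where "h0 \<in> H" "h0 \<notin> B" using H(3) by blast
  moreover have "h0 \<in> carrier G0" using \<open>h0 \<in> H\<close> subgroup.subset[OF H(1)] by blast
  ultimately obtain k0 p0 where h0: "(k0, p0) \<in> H" "k0 < 3" "p0 \<in> Bvec" "k0 \<noteq> 0"
    by (cases h0) (auto simp: B_iff G0_carrier)
  obtain p1 where p1: "(1, p1) \<in> H" "p1 \<in> Bvec"
  proof (cases "k0 = 1")
    case True
    then show ?thesis using that h0 by blast
  next
    case False
    then have "k0 = 2" using h0 by auto
    then have "(k0, p0) \<otimes>\<^bsub>G0\<^esub> (k0, p0) = (1, vadd p0 (smul (omega ^ 2) p0))" using h0 by (simp add: G0_mult)
    moreover have "(k0, p0) \<otimes>\<^bsub>G0\<^esub> (k0, p0) \<in> H" using subgroup.m_closed[OF H(1) h0(1) h0(1)] .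
    ultimately show ?thesis using that h0(3) by simp
  qed
  then have "(1, emb (trunc N p1)) \<in> H"
    using approx_in[OF H(1) H(2) p1(1)] trunc_close_sym[OF p1(2)] by simp
  then show ?thesis by blast
qed

text \<open>If moreover \<open>(1, v\<^sub>0) \<in> H\<close>, the integral points of \<open>H\<close> form an ideal containing \<open>3\<^sup>N\<close>,
  hence \<open>\<lambda>\<^sup>2\<^sup>N = (-\<omega>)\<^sup>N 3\<^sup>N\<close>; so they are \<open>\<lambda>\<^sup>m \<int>[\<omega>]\<close> for some \<open>m\<close>.\<close>

lemma int_points_lam_power:
  assumes H: "subgroup H G0" "Nbh N \<subseteq> H" "(1, emb v0) \<in> H"
  shows "\<exists>m. \<forall>z. (0, emb z) \<in> H \<longleftrightarrow> (\<exists>r. z = lam ^ m * r)"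
proof -
  define I where "I = {z. (0, emb z) \<in> H}"
  have I: "eis_ideal I" unfolding I_def
    by (rule eis_idealI[OF int_points_subgroup[OF H(1)]]) (use conj_rotation[OF H(1) H(3)] in auto)
  have "(0, emb (3 ^ N)) \<in> Nbh N" by (simp add: Nbh_iff emb_NB)
  then have "3 ^ N \<in> I" using H(2) unfolding I_def by auto
  moreover have "lam ^ (2 * N) = (- omega) ^ N * 3 ^ N"
  proof -
    have "lam ^ (2 * N) = (3 * (- omega)) ^ N" by (simp only: power_mult lam_sq)
    then show ?thesis by (simp only: power_mult_distrib mult.commute)
  qed
  ultimately have "lam ^ (2 * N) \<in> I" using I unfolding eis_ideal_def by simp
  then obtain m where "I = {lam ^ m * r | r. True}" using eis_ideal_lam_power[OF I] by blast
  then show ?thesis unfolding I_def by blast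
qed

lemma open_subgroup_not_in_B:
  assumes "subgroup H G0" "Nbh N \<subseteq> H" "\<not> H \<subseteq> B"
  shows "\<exists>v0 m. lam_power_subgroup H N v0 m"
proof -
  obtain v0 where v0: "(1, emb v0) \<in> H" using integral_rotation_in[OF assms] by blast
  then obtain m where "\<forall>z. (0, emb z) \<in> H \<longleftrightarrow> (\<exists>r. z = lam ^ m * r)"
    using int_points_lam_power[OF assms(1,2)] by blast
  then have "lam_power_subgroup H N v0 m" using assms(1,2) v0 by (intro lam_power_subgroup.intro) simp_all
  then show ?thesis by blast
qed

theorem mainTheorem8:
  shows "(\<forall>H. open_subgroup H \<and> \<not> H \<subseteq> B \<longrightarrow> top_iso_G0 H)
       \<and> (\<forall>H. open_subgroup H \<longrightarrow> dgen H = 2)"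
proof -
  have "top_iso_G0 H" if "open_subgroup H" "\<not> H \<subseteq> B" for H
    using that open_subgroup_not_in_B lam_power_subgroup.top_iso unfolding open_subgroup_def by blast
  moreover have "dgen H = 2" if op: "open_subgroup H" for H
  proof -
    obtain N where H: "subgroup H G0" "Nbh N \<subseteq> H" using op unfolding open_subgroup_def by blast
    have "\<exists>S. finite S \<and> card S \<le> 2 \<and> top_generates H S"
      using open_subgroup_in_B[OF H] open_subgroup_not_in_B[OF H] lam_power_subgroup.two_generated by blast
    then show ?thesis using dgen_eq_2[OF H] by blast
  qed
  ultimately show ?thesis by blast
qed

end
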